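(* Let $q$ be a prime power, let $F_1\subsetneq F_0\subseteq\mathbb{F}_q^n$ be linear codes of dimensions $f_1<f_0$, and let $G_E\in\mathbb{F}_q^{e\times n}$ be a matrix (not necessarily of full rank) with row space $E$ such that $F_0\cap E=\{\underline{0}\}$. Let $0\le u\le e$, $v=e-u$, and write $G_E=\begin{bmatrix}G_U\\ G_V\end{bmatrix}$ with $G_U$ the first $u$ rows and $G_V$ the last $v$ rows; let $U$ and $V$ be the row spaces of $G_U$ and $G_V$. Consider the QSS scheme on $n+e$ parties given by the extended CSS code $\mathrm{ECSS}(F_0,F_1,G_E)$ (party $j$ holding the $j$-th encoded qudit). Define $$\tau_u=n-\min\{\mathrm{wt}((F_0+V)\setminus(F_1+V)),\ \mathrm{wt}((F_1+U)^\perp\setminus(F_0+U)^\perp)\}+1.$$ Then for an integer $0\le\tau\le n$, the set $J\cup\{n+1,n+2,\dots,n+u\}$ is authorized for every $J\subseteq[n]$ with $|J|=\tau$ if and only if $\tau\geq\tau_u$.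
   Context: For linear codes $L_1\subsetneq L_0\subseteq\mathbb{F}_q^n$, $\mathrm{wt}(L_0\setminus L_1)=\min\{\mathrm{wt}(\underline{c}):\underline{c}\in L_0,\ \underline{c}\notin L_1\}$ (Hamming weight); $L^\perp$ is the dual code. For a generator matrix $G_{F_0}=\begin{bmatrix}G_{F_0/F_1}\\ G_{F_1}\end{bmatrix}$ of $F_0$ with $G_{F_1}$ a generator matrix of $F_1$ and $G_{F_0/F_1}$ generating a complement of $F_1$ in $F_0$, the extended CSS code $\mathrm{ECSS}(F_0,F_1,G_E)$ is the CSS code of $C_0$ over $C_1$, where $C_0,C_1\subseteq\mathbb{F}_q^{n+e}$ are generated by $\begin{bmatrix}G_{F_0}&0\\ G_E&I_e\end{bmatrix}$ and $\begin{bmatrix}G_{F_1}&0\\ G_E&I_e\end{bmatrix}$ respectively. Its encoding maps, up to normalization and extended linearly, a basis state $|\underline{s}\rangle$, $\underline{s}\in\mathbb{F}_q^{f_0-f_1}$, to $$\sum_{\underline{r}_1\in\mathbb{F}_q^{f_1},\,\underline{r}_2\in\mathbb{F}_q^{e}}\Big|[\,G_{F_0/F_1}^T\ G_{F_1}^T\ G_E^T\,]\begin{bmatrix}\underline{s}\\ \underline{r}_1\\ \underline{r}_2\end{bmatrix}\Big\rangle|\underline{r}_2\rangle,$$ a state of $n+e$ qudits of dimension $q$; qudit $j$ is given to party $j\in[n+e]$. In a QSS scheme, a set of parties is authorized if the secret can be recovered from their shares (and unauthorized if their shares contain no information about the secret). *)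

theory Defs
  imports Complex_Main
begin

text \<open>Vectors of F_q^m are functions nat => 'a vanishing from index m on (0-based indices).
 Matrices with m rows are functions g :: nat => nat => 'a, row k being g k.\<close>

definition words :: "nat \<Rightarrow> (nat \<Rightarrow> 'a::zero) set" where
  "words m = {x. \<forall>i\<ge>m. x i = 0}"

definition lincomb :: "(nat \<Rightarrow> nat \<Rightarrow> 'a::comm_ring_1) \<Rightarrow> nat \<Rightarrow> (nat \<Rightarrow> 'a) \<Rightarrow> (nat \<Rightarrow> 'a)" where
  "lincomb g m c = (\<lambda>i. \<Sum>k<m. c k * g k i)"

definition span_rows :: "(nat \<Rightarrow> nat \<Rightarrow> 'a::comm_ring_1) \<Rightarrow> nat \<Rightarrow> (nat \<Rightarrow> 'a) set" where
  "span_rows g m = {lincomb g m c | c. True}"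

definition lin_indep_rows :: "(nat \<Rightarrow> nat \<Rightarrow> 'a::comm_ring_1) \<Rightarrow> nat \<Rightarrow> bool" where
  "lin_indep_rows g m = (\<forall>c. lincomb g m c = (\<lambda>_. 0) \<longrightarrow> (\<forall>k<m. c k = 0))"

definition stack :: "(nat \<Rightarrow> nat \<Rightarrow> 'a) \<Rightarrow> nat \<Rightarrow> (nat \<Rightarrow> nat \<Rightarrow> 'a) \<Rightarrow> nat \<Rightarrow> nat \<Rightarrow> 'a" where
  "stack g1 m1 g2 = (\<lambda>k. if k < m1 then g1 k else g2 (k - m1))"

definition set_plus_vec :: "(nat \<Rightarrow> 'a::plus) set \<Rightarrow> (nat \<Rightarrow> 'a) set \<Rightarrow> (nat \<Rightarrow> 'a) set" where
  "set_plus_vec A B = {(\<lambda>i. a i + b i) | a b. a \<in> A \<and> b \<in> B}"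

definition wt :: "nat \<Rightarrow> (nat \<Rightarrow> 'a::zero) \<Rightarrow> nat" where
  "wt n x = card {i. i < n \<and> x i \<noteq> 0}"

definition wt_diff :: "nat \<Rightarrow> (nat \<Rightarrow> 'a::zero) set \<Rightarrow> (nat \<Rightarrow> 'a) set \<Rightarrow> nat" where
  "wt_diff n L0 L1 = Min (wt n ` (L0 - L1))"

definition dual :: "nat \<Rightarrow> (nat \<Rightarrow> 'a::comm_ring_1) set \<Rightarrow> (nat \<Rightarrow> 'a) set" where
  "dual n L = {x \<in> words n. \<forall>c\<in>L. (\<Sum>i<n. x i * c i) = 0}"

definition tau_u :: "nat \<Rightarrow> (nat \<Rightarrow> 'a::comm_ring_1) set \<Rightarrow> (nat \<Rightarrow> 'a) set
    \<Rightarrow> (nat \<Rightarrow> nat \<Rightarrow> 'a) \<Rightarrow> nat \<Rightarrow> nat \<Rightarrow> int" where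
  "tau_u n F0 F1 GE e u =
    (let U = span_rows GE u; V = span_rows (\<lambda>k. GE (u + k)) (e - u) in
     int n - int (min (wt_diff n (set_plus_vec F0 V) (set_plus_vec F1 V))
                      (wt_diff n (dual n (set_plus_vec F1 U)) (dual n (set_plus_vec F0 U)))) + 1)"

text \<open>classical part [G_{F0/F1}^T G_{F1}^T G_E^T] (s; r1; r2), of length n\<close>
definition ecss_cw :: "nat \<Rightarrow> nat \<Rightarrow> nat \<Rightarrow> (nat \<Rightarrow> nat \<Rightarrow> 'a::comm_ring_1) \<Rightarrow> (nat \<Rightarrow> nat \<Rightarrow> 'a)
    \<Rightarrow> (nat \<Rightarrow> nat \<Rightarrow> 'a) \<Rightarrow> (nat \<Rightarrow> 'a) \<Rightarrow> (nat \<Rightarrow> 'a) \<Rightarrow> (nat \<Rightarrow> 'a) \<Rightarrow> (nat \<Rightarrow> 'a)" where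
  "ecss_cw f0 f1 e gQ gF1 GE s r1 r2 =
     (\<lambda>i. (\<Sum>k<f0 - f1. s k * gQ k i) + (\<Sum>k<f1. r1 k * gF1 k i) + (\<Sum>k<e. r2 k * GE k i))"

text \<open>the basis word of n+e qudits: first n from c, then r2 (party j <-> index j-1)\<close>
definition join_word :: "nat \<Rightarrow> (nat \<Rightarrow> 'a::zero) \<Rightarrow> (nat \<Rightarrow> 'a) \<Rightarrow> nat \<Rightarrow> 'a" where
  "join_word n c r = (\<lambda>i. if i < n then c i else r (i - n))"

text \<open>amplitude of basis word w in the normalized encoding of the basis secret |s>\<close>
definition ecss_enc :: "nat \<Rightarrow> nat \<Rightarrow> nat \<Rightarrow> nat \<Rightarrow> (nat \<Rightarrow> nat \<Rightarrow> 'a::{finite,field}) \<Rightarrow> (nat \<Rightarrow> nat \<Rightarrow> 'a)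
    \<Rightarrow> (nat \<Rightarrow> nat \<Rightarrow> 'a) \<Rightarrow> (nat \<Rightarrow> 'a) \<Rightarrow> (nat \<Rightarrow> 'a) \<Rightarrow> complex" where
  "ecss_enc n f0 f1 e gQ gF1 GE s w =
     (1 / complex_of_real (sqrt (real (card (UNIV :: 'a set) ^ (f1 + e))))) *
     (\<Sum>r1\<in>words f1. \<Sum>r2\<in>words e.
        if w = join_word n (ecss_cw f0 f1 e gQ gF1 GE s r1 r2) r2 then 1 else 0)"

definition is_density :: "nat \<Rightarrow> ((nat \<Rightarrow> 'a::{finite,zero}) \<Rightarrow> (nat \<Rightarrow> 'a) \<Rightarrow> complex) \<Rightarrow> bool" where
  "is_density k \<rho> =
     ((\<forall>s\<in>words k. \<forall>s'\<in>words k. \<rho> s' s = cnj (\<rho> s s')) \<and>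
      (\<Sum>s\<in>words k. \<rho> s s) = 1 \<and>
      (\<forall>v. Re (\<Sum>s\<in>words k. \<Sum>s'\<in>words k. cnj (v s) * \<rho> s s' * v s') \<ge> 0))"

definition ecss_rho :: "nat \<Rightarrow> nat \<Rightarrow> nat \<Rightarrow> nat \<Rightarrow> (nat \<Rightarrow> nat \<Rightarrow> 'a::{finite,field}) \<Rightarrow> (nat \<Rightarrow> nat \<Rightarrow> 'a)
    \<Rightarrow> (nat \<Rightarrow> nat \<Rightarrow> 'a) \<Rightarrow> ((nat \<Rightarrow> 'a) \<Rightarrow> (nat \<Rightarrow> 'a) \<Rightarrow> complex)
    \<Rightarrow> (nat \<Rightarrow> 'a) \<Rightarrow> (nat \<Rightarrow> 'a) \<Rightarrow> complex" where
  "ecss_rho n f0 f1 e gQ gF1 GE \<rho> w w' =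
     (\<Sum>s\<in>words (f0 - f1). \<Sum>s'\<in>words (f0 - f1).
        \<rho> s s' * ecss_enc n f0 f1 e gQ gF1 GE s w * cnj (ecss_enc n f0 f1 e gQ gF1 GE s' w'))"

text \<open>basis words of the qudits in A (the share of the parties in A)\<close>
definition words_on :: "nat \<Rightarrow> nat set \<Rightarrow> (nat \<Rightarrow> 'a::zero) set" where
  "words_on N A = {x \<in> words N. \<forall>i. i \<notin> A \<longrightarrow> x i = 0}"

definition partial_trace :: "nat \<Rightarrow> nat set \<Rightarrow> ((nat \<Rightarrow> 'a::{finite,monoid_add}) \<Rightarrow> (nat \<Rightarrow> 'a) \<Rightarrow> complex)
    \<Rightarrow> (nat \<Rightarrow> 'a) \<Rightarrow> (nat \<Rightarrow> 'a) \<Rightarrow> complex" where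
  "partial_trace N A R x y =
     (\<Sum>z\<in>words_on N ({..<N} - A). R (\<lambda>i. x i + z i) (\<lambda>i. y i + z i))"

text \<open>A set A of parties is authorized if some quantum channel (Kraus operators K_i from
  the space of A's qudits to the secret space, sum K_i^* K_i = I) recovers every encoded
  secret state from the reduced state on A.\<close>
definition ecss_authorized :: "nat \<Rightarrow> nat \<Rightarrow> nat \<Rightarrow> nat \<Rightarrow> (nat \<Rightarrow> nat \<Rightarrow> 'a::{finite,field}) \<Rightarrow> (nat \<Rightarrow> nat \<Rightarrow> 'a)
    \<Rightarrow> (nat \<Rightarrow> nat \<Rightarrow> 'a) \<Rightarrow> nat set \<Rightarrow> bool" where
  "ecss_authorized n f0 f1 e gQ gF1 GE A =
    (\<exists>(m::nat) (K :: nat \<Rightarrow> (nat \<Rightarrow> 'a) \<Rightarrow> (nat \<Rightarrow> 'a) \<Rightarrow> complex).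
       (\<forall>x\<in>words_on (n + e) A. \<forall>y\<in>words_on (n + e) A.
          (\<Sum>i<m. \<Sum>s\<in>words (f0 - f1). cnj (K i s x) * K i s y) = (if x = y then 1 else 0)) \<and>
       (\<forall>\<rho>. is_density (f0 - f1) \<rho> \<longrightarrow>
          (\<forall>s\<in>words (f0 - f1). \<forall>s'\<in>words (f0 - f1).
             (\<Sum>i<m. \<Sum>x\<in>words_on (n + e) A. \<Sum>y\<in>words_on (n + e) A.
                K i s x * partial_trace (n + e) A (ecss_rho n f0 f1 e gQ gF1 GE \<rho>) x y * cnj (K i s' y))
             = \<rho> s s')))"

end

theory Submission
  imports Defs "HOL-Library.Function_Algebras" "HOL-Library.FuncSet"
begin

text \<open>The encoding of a basis secret \<open>|s\<rangle>\<close> is the uniform superposition over a coset \<open>W\<^sub>s\<close> of the code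
  \<open>C\<^sub>1\<close>, so whether a set \<open>A\<close> of parties is authorized is decided by how these cosets look on \<open>A\<close>.
  If no nonzero secret has a coset word vanishing on \<open>A\<close> and every coset has a word supported on
  \<open>A\<close>, explicit \<open>0/1\<close> Kraus operators recover the secret. Conversely, a coset word of \<open>s \<noteq> 0\<close>
  vanishing on \<open>A\<close> makes the encodings of \<open>|0\<rangle>\<close> and \<open>|s\<rangle>\<close> look alike on \<open>A\<close>, and a linear functional
  vanishing on \<open>A\<close> and on \<open>W\<^sub>0\<close> but not on some \<open>W\<^sub>\<delta>\<close> makes the superposition and the mixture of
  \<open>|0\<rangle>\<close> and \<open>|\<delta>\<rangle>\<close> look alike on \<open>A\<close>.

  For \<open>A = J \<union> {n+1, \<dots>, n+u}\<close> the first obstruction is a word of \<open>(F\<^sub>0 + V) - (F\<^sub>1 + V)\<close> vanishing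
  on \<open>J\<close>, and by linear duality the second is a word of \<open>(F\<^sub>1 + U)\<^sup>\<bottom> - (F\<^sub>0 + U)\<^sup>\<bottom>\<close> vanishing on \<open>J\<close>.
  Some \<open>\<tau>\<close>-set \<open>J\<close> lies in the zero set of a word of \<open>X\<close> iff \<open>n - \<tau>\<close> is at least the minimum weight
  of \<open>X\<close>, which yields the threshold \<open>\<tau>\<^sub>u\<close>.\<close>

section \<open>Coordinate vectors, row spaces and duals\<close>

lemma zero_in_words [simp]: "0 \<in> words m" "(\<lambda>_. 0) \<in> words m"
  by (simp_all add: words_def)

lemma words_add: "x \<in> words m \<Longrightarrow> y \<in> words m \<Longrightarrow> (x :: nat \<Rightarrow> 'a::monoid_add) + y \<in> words m"
  by (simp add: words_def)

lemma words_diff: "x \<in> words m \<Longrightarrow> y \<in> words m \<Longrightarrow> (x :: nat \<Rightarrow> 'a::group_add) - y \<in> words m"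
  by (simp add: words_def)

lemma card_words: "card (words m :: (nat \<Rightarrow> 'a::{finite,zero}) set) = card (UNIV :: 'a set) ^ m"
proof -
  have "bij_betw (\<lambda>x. restrict x {..<m}) (words m) (PiE {..<m} (\<lambda>_. UNIV :: 'a set))"
    by (rule bij_betwI[where g = "\<lambda>f i. if i < m then f i else 0"])
       (auto simp: words_def fun_eq_iff PiE_iff extensional_def)
  then show ?thesis
    by (simp add: bij_betw_same_card card_PiE)
qed

lemma finite_words [simp]: "finite (words m :: (nat \<Rightarrow> 'a::{finite,zero}) set)"
  using card_words[where 'a = 'a, of m] by (intro card_ge_0_finite) (simp add: finite_UNIV_card_ge_0)

lemma words_on_iff: "x \<in> words_on N A \<longleftrightarrow> x \<in> words N \<and> (\<forall>i. i \<notin> A \<longrightarrow> x i = 0)"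
  by (simp add: words_on_def)

lemma words_on_complement_iff:
  "z \<in> words_on N ({..<N} - A) \<longleftrightarrow> z \<in> words N \<and> (\<forall>i\<in>A. z i = 0)"
  by (auto simp: words_on_def words_def)

lemma finite_words_on [simp]: "finite (words_on N A :: (nat \<Rightarrow> 'a::{finite,zero}) set)"
  by (simp add: words_on_def)

lemma words_on_add: "x \<in> words_on N A \<Longrightarrow> y \<in> words_on N A \<Longrightarrow> (x :: nat \<Rightarrow> 'a::monoid_add) + y \<in> words_on N A"
  by (simp add: words_on_def words_def)

lemma words_on_diff: "x \<in> words_on N A \<Longrightarrow> y \<in> words_on N A \<Longrightarrow> (x :: nat \<Rightarrow> 'a::group_add) - y \<in> words_on N A"
  by (simp add: words_on_def words_def)

lemma set_plus_vec_iff: "x \<in> set_plus_vec X Y \<longleftrightarrow> (\<exists>a\<in>X. \<exists>b\<in>Y. x = a + b)"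
  unfolding set_plus_vec_def plus_fun_def by blast

lemma set_plus_vec_mono: "X \<subseteq> X' \<Longrightarrow> Y \<subseteq> Y' \<Longrightarrow> set_plus_vec X Y \<subseteq> set_plus_vec X' Y'"
  unfolding set_plus_vec_def by blast

lemma set_plus_vec_zero_right: "x \<in> X \<Longrightarrow> 0 \<in> Y \<Longrightarrow> (x :: nat \<Rightarrow> 'a::monoid_add) \<in> set_plus_vec X Y"
  unfolding set_plus_vec_iff by (rule bexI[of _ x], rule bexI[of _ 0]) simp_all

lemma set_plus_vec_zero_left: "0 \<in> X \<Longrightarrow> y \<in> Y \<Longrightarrow> (y :: nat \<Rightarrow> 'a::monoid_add) \<in> set_plus_vec X Y"
  unfolding set_plus_vec_iff by (rule bexI[of _ 0], rule bexI[of _ y]) simp_all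

lemma lincomb_cong: "(\<And>k. k < m \<Longrightarrow> c k = d k) \<Longrightarrow> lincomb g m c = lincomb g m d"
  unfolding lincomb_def by (intro ext sum.cong) auto

lemma lincomb_eq_0: "(\<And>k. k < m \<Longrightarrow> c k = 0) \<Longrightarrow> lincomb g m c = 0"
  unfolding lincomb_def by (simp add: fun_eq_iff)

lemma lincomb_in_words: "\<forall>k<m. g k \<in> words n \<Longrightarrow> lincomb g m c \<in> words n"
  unfolding lincomb_def words_def by simp

lemma lincomb_diff: "lincomb g m c - lincomb g m d = lincomb g m (\<lambda>k. c k - d k)"
  unfolding lincomb_def by (simp add: fun_eq_iff sum_subtractf left_diff_distrib)

lemma lincomb_uminus: "lincomb g m (\<lambda>k. - c k) = - lincomb g m c"
  unfolding lincomb_def by (simp add: fun_eq_iff sum_negf)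

lemma lincomb_unit: "k < m \<Longrightarrow> lincomb g m (\<lambda>j. if j = k then 1 else 0) = g k"
  unfolding lincomb_def by (simp add: fun_eq_iff if_distrib[of "\<lambda>x. x * _"] cong: if_cong)

lemma lincomb_Suc: "lincomb g (Suc m) c = (\<lambda>i. lincomb g m c i + c m * g m i)"
  unfolding lincomb_def by simp

lemma lincomb_stack:
  "lincomb (stack g1 m1 g2) (m1 + m2) c = lincomb g1 m1 c + lincomb g2 m2 (\<lambda>k. c (m1 + k))"
proof -
  have "(\<Sum>k<m1 + m2. f k) = (\<Sum>k<m1. f k) + (\<Sum>k<m2. f (m1 + k))" for f :: "nat \<Rightarrow> 'a"
    by (induction m2) (simp_all add: add.assoc)
  then show ?thesis
    unfolding lincomb_def stack_def by (simp add: fun_eq_iff cong: if_cong)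
qed

lemma lincomb_in_span_rows [simp]: "lincomb g m c \<in> span_rows g m"
  unfolding span_rows_def by blast

lemma span_rows_iff: "x \<in> span_rows g m \<longleftrightarrow> (\<exists>c. x = lincomb g m c)"
  unfolding span_rows_def by blast

lemma zero_in_span_rows [simp]: "0 \<in> span_rows g m"
  using lincomb_in_span_rows[of g m "\<lambda>_. 0"] lincomb_eq_0[of m "\<lambda>_. 0" g] by simp

lemma span_rows_diff: "x \<in> span_rows g m \<Longrightarrow> y \<in> span_rows g m \<Longrightarrow> x - y \<in> span_rows g m"
  unfolding span_rows_iff by (auto simp: lincomb_diff)

lemma span_rows_stack:
  "span_rows (stack g1 m1 g2) (m1 + m2) = set_plus_vec (span_rows g1 m1) (span_rows g2 m2)"
proof
  show "span_rows (stack g1 m1 g2) (m1 + m2) \<subseteq> set_plus_vec (span_rows g1 m1) (span_rows g2 m2)"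
  proof
    fix x assume "x \<in> span_rows (stack g1 m1 g2) (m1 + m2)"
    then obtain c where "x = lincomb (stack g1 m1 g2) (m1 + m2) c" by (auto simp: span_rows_iff)
    then show "x \<in> set_plus_vec (span_rows g1 m1) (span_rows g2 m2)"
      unfolding lincomb_stack set_plus_vec_iff by (metis lincomb_in_span_rows)
  qed
  show "set_plus_vec (span_rows g1 m1) (span_rows g2 m2) \<subseteq> span_rows (stack g1 m1 g2) (m1 + m2)"
  proof
    fix x assume "x \<in> set_plus_vec (span_rows g1 m1) (span_rows g2 m2)"
    then obtain c1 c2 where x: "x = lincomb g1 m1 c1 + lincomb g2 m2 c2"
      by (auto simp: set_plus_vec_iff span_rows_iff)
    let ?c = "\<lambda>k. if k < m1 then c1 k else c2 (k - m1)"
    have "x = lincomb (stack g1 m1 g2) (m1 + m2) ?c"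
      unfolding x lincomb_stack by (simp add: lincomb_cong[of m1 ?c c1])
    then show "x \<in> span_rows (stack g1 m1 g2) (m1 + m2)" by simp
  qed
qed

lemma span_rows_Suc:
  "v \<in> span_rows g (Suc m) \<longleftrightarrow> (\<exists>l. (\<lambda>i. v i - l * g m i) \<in> span_rows g m)"
proof
  assume "v \<in> span_rows g (Suc m)"
  then obtain c where "v = lincomb g (Suc m) c" by (auto simp: span_rows_iff)
  then have "(\<lambda>i. v i - c m * g m i) = lincomb g m c" by (simp add: lincomb_Suc)
  then show "\<exists>l. (\<lambda>i. v i - l * g m i) \<in> span_rows g m" by (metis lincomb_in_span_rows)
next
  assume "\<exists>l. (\<lambda>i. v i - l * g m i) \<in> span_rows g m"
  then obtain l c where c: "(\<lambda>i. v i - l * g m i) = lincomb g m c" by (auto simp: span_rows_iff)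
  have "v = lincomb g (Suc m) (c(m := l))"
    using c by (simp add: lincomb_Suc lincomb_cong[of m "c(m := l)" c] fun_eq_iff algebra_simps)
  then show "v \<in> span_rows g (Suc m)" by simp
qed

lemma words_mono: "u \<le> m \<Longrightarrow> words u \<subseteq> words m"
  by (auto simp: words_def)

lemma span_rows_iff_words: "x \<in> span_rows g m \<longleftrightarrow> (\<exists>c\<in>words m. x = lincomb g m c)"
proof -
  have "lincomb g m c = lincomb g m (\<lambda>k. if k < m then c k else 0)" for c
    by (rule lincomb_cong) simp
  moreover have "(\<lambda>k. if k < m then c k else 0) \<in> words m" for c :: "nat \<Rightarrow> 'a"
    by (simp add: words_def)
  ultimately show ?thesis by (auto simp: span_rows_iff)
qed

lemma lincomb_prefix: "c \<in> words u \<Longrightarrow> u \<le> m \<Longrightarrow> lincomb g m c = lincomb g u c"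
  unfolding lincomb_def words_def by (intro ext sum.mono_neutral_right) auto

lemma lincomb_split_at:
  assumes "u \<le> m"
  shows "lincomb g m c = lincomb g u c + lincomb (\<lambda>k. g (u + k)) (m - u) (\<lambda>k. c (u + k))"
proof -
  have "stack g u (\<lambda>k. g (u + k)) = g" by (simp add: stack_def fun_eq_iff)
  with lincomb_stack[of g u "\<lambda>k. g (u + k)" "m - u" c] assms show ?thesis by simp
qed

lemma span_rows_suffix_iff:
  assumes "u \<le> m"
  shows "x \<in> span_rows (\<lambda>k. g (u + k)) (m - u) \<longleftrightarrow> (\<exists>d\<in>words m. (\<forall>k<u. d k = 0) \<and> x = lincomb g m d)"
proof
  assume "x \<in> span_rows (\<lambda>k. g (u + k)) (m - u)"
  then obtain c where x: "x = lincomb (\<lambda>k. g (u + k)) (m - u) c" by (auto simp: span_rows_iff)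
  define d where "d = (\<lambda>k. if u \<le> k \<and> k < m then c (k - u) else 0)"
  have "lincomb g m d = lincomb g u d + lincomb (\<lambda>k. g (u + k)) (m - u) (\<lambda>k. d (u + k))"
    by (rule lincomb_split_at[OF assms])
  also have "lincomb g u d = 0" by (rule lincomb_eq_0) (simp add: d_def)
  also have "lincomb (\<lambda>k. g (u + k)) (m - u) (\<lambda>k. d (u + k)) = lincomb (\<lambda>k. g (u + k)) (m - u) c"
    by (rule lincomb_cong) (auto simp: d_def)
  finally have "lincomb g m d = lincomb (\<lambda>k. g (u + k)) (m - u) c" by simp
  moreover have "d \<in> words m" "\<forall>k<u. d k = 0" by (simp_all add: d_def words_def)
  ultimately show "\<exists>d\<in>words m. (\<forall>k<u. d k = 0) \<and> x = lincomb g m d" using x by metis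
next
  assume "\<exists>d\<in>words m. (\<forall>k<u. d k = 0) \<and> x = lincomb g m d"
  then obtain d where "\<forall>k<u. d k = 0" "x = lincomb g m d" by blast
  with assms show "x \<in> span_rows (\<lambda>k. g (u + k)) (m - u)"
    by (simp add: lincomb_split_at[of u m g d] lincomb_eq_0)
qed

definition dot :: "nat \<Rightarrow> (nat \<Rightarrow> 'a::comm_ring_1) \<Rightarrow> (nat \<Rightarrow> 'a) \<Rightarrow> 'a" where
  "dot n x y = (\<Sum>i<n. x i * y i)"

lemma dot_add_right: "dot n y (x + z) = dot n y x + dot n y z"
  unfolding dot_def by (simp add: sum.distrib distrib_left)

lemma dot_lincomb_right: "dot n y (lincomb g m c) = (\<Sum>k<m. c k * dot n y (g k))"
  unfolding dot_def lincomb_def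
  by (simp add: sum_distrib_left sum_distrib_right mult_ac sum.swap[of _ "{..<n}"])

lemma dot_scaled_diff_left: "dot n (\<lambda>i. a i - c * b i) x = dot n a x - c * dot n b x"
  unfolding dot_def by (simp add: sum_subtractf sum_distrib_left left_diff_distrib mult.assoc)

lemma dot_scaled_diff_right: "dot n y (\<lambda>i. w i - c * g i) = dot n y w - c * dot n y g"
  unfolding dot_def by (simp add: sum_subtractf sum_distrib_left right_diff_distrib mult_ac)

lemma dot_unit_left: "i < n \<Longrightarrow> dot n (\<lambda>j. if j = i then 1 else 0) w = w i"
  unfolding dot_def by (simp add: if_distrib[of "\<lambda>x. x * _"] cong: if_cong)

lemma dot_split_length: "dot (n + m) x y = dot n x y + (\<Sum>k<m. x (n + k) * y (n + k))"
  unfolding dot_def by (induction m) (simp_all add: add.assoc)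

lemma dual_iff_dot: "y \<in> dual n L \<longleftrightarrow> y \<in> words n \<and> (\<forall>c\<in>L. dot n y c = 0)"
  unfolding dual_def dot_def by blast

lemma dual_span_rows_iff:
  "y \<in> dual n (span_rows g m) \<longleftrightarrow> y \<in> words n \<and> (\<forall>k<m. dot n y (g k) = 0)"
proof -
  have "(\<forall>c\<in>span_rows g m. dot n y c = 0) \<longleftrightarrow> (\<forall>k<m. dot n y (g k) = 0)"
  proof
    assume "\<forall>c\<in>span_rows g m. dot n y c = 0"
    then show "\<forall>k<m. dot n y (g k) = 0" by (metis lincomb_in_span_rows lincomb_unit)
  qed (auto simp: span_rows_iff dot_lincomb_right)
  then show ?thesis by (simp add: dual_iff_dot)
qed

lemma dual_set_plus_vec:
  assumes "0 \<in> X" "0 \<in> Y"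
  shows "dual n (set_plus_vec X Y) = dual n X \<inter> dual n Y"
proof -
  have "(\<forall>c\<in>set_plus_vec X Y. dot n y c = 0) \<longleftrightarrow> (\<forall>a\<in>X. dot n y a = 0) \<and> (\<forall>b\<in>Y. dot n y b = 0)"
    for y
  proof
    assume "\<forall>c\<in>set_plus_vec X Y. dot n y c = 0"
    moreover have "a + 0 \<in> set_plus_vec X Y" "0 + b \<in> set_plus_vec X Y" if "a \<in> X" "b \<in> Y" for a b
      unfolding set_plus_vec_iff using assms that by blast+
    ultimately show "(\<forall>a\<in>X. dot n y a = 0) \<and> (\<forall>b\<in>Y. dot n y b = 0)"
      using assms by (metis add_0_right add_0)
  qed (auto simp: set_plus_vec_iff dot_add_right)
  then show ?thesis by (auto simp: dual_iff_dot)
qed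

lemma dual_span_rows_Suc_combination:
  fixes g :: "nat \<Rightarrow> nat \<Rightarrow> 'a::field"
  assumes "y1 \<in> dual n (span_rows g m)" "y2 \<in> dual n (span_rows g m)" "dot n y1 (g m) \<noteq> 0"
  shows "(\<lambda>i. y2 i - dot n y2 (g m) / dot n y1 (g m) * y1 i) \<in> dual n (span_rows g (Suc m))"
proof -
  have "dot n (\<lambda>i. y2 i - dot n y2 (g m) / dot n y1 (g m) * y1 i) (g k) = 0" if "k < Suc m" for k
    using assms that unfolding dot_scaled_diff_left by (auto simp: dual_span_rows_iff less_Suc_eq)
  moreover have "(\<lambda>i. y2 i - dot n y2 (g m) / dot n y1 (g m) * y1 i) \<in> words n"
    using assms(1,2) by (simp add: dual_span_rows_iff words_def)
  ultimately show ?thesis by (simp add: dual_span_rows_iff)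
qed

text \<open>Gaussian elimination: \<open>w\<close> is reduced by a multiple of the last row, and the dual vector found
  for the reduced word is corrected so as to annihilate the last row too.\<close>

lemma notin_span_rows_dual:
  fixes g :: "nat \<Rightarrow> nat \<Rightarrow> 'a::field"
  assumes "\<forall>k<m. g k \<in> words n" "w \<in> words n" "w \<notin> span_rows g m"
  shows "\<exists>y\<in>dual n (span_rows g m). dot n y w \<noteq> 0"
  using assms
proof (induction m arbitrary: w)
  case 0
  then obtain i where i: "w i \<noteq> 0"
    by (auto simp: span_rows_iff lincomb_def fun_eq_iff)
  with 0 have "i < n" by (cases "i < n") (auto simp: words_def)
  then have "(\<lambda>j. if j = i then 1 else 0) \<in> dual n (span_rows g 0)"
    by (simp add: words_def dual_span_rows_iff)
  with \<open>i < n\<close> i show ?case by (force simp: dot_unit_left)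
next
  case (Suc m)
  have rows: "\<forall>k<m. g k \<in> words n" "g m \<in> words n" using Suc.prems(1) by simp_all
  have "w \<notin> span_rows g m"
  proof
    assume "w \<in> span_rows g m"
    then have "(\<lambda>i. w i - 0 * g m i) \<in> span_rows g m" by simp
    then show False using Suc.prems(3) span_rows_Suc by blast
  qed
  then obtain y1 where y1: "y1 \<in> dual n (span_rows g m)" "dot n y1 w \<noteq> 0"
    using Suc.IH rows Suc.prems(2) by blast
  show ?case
  proof (cases "dot n y1 (g m) = 0")
    case True
    with y1 show ?thesis by (auto simp: dual_span_rows_iff less_Suc_eq)
  next
    case nz: False
    define l where "l = dot n y1 w / dot n y1 (g m)"
    define w' where "w' = (\<lambda>i. w i - l * g m i)"
    have "w' \<notin> span_rows g m"
      using Suc.prems(3) span_rows_Suc[of w g m] by (auto simp: w'_def)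
    moreover have "w' \<in> words n"
      using Suc.prems(2) rows(2) by (simp add: w'_def words_def)
    ultimately obtain y2 where y2: "y2 \<in> dual n (span_rows g m)" "dot n y2 w' \<noteq> 0"
      using Suc.IH rows by blast
    let ?y = "\<lambda>i. y2 i - dot n y2 (g m) / dot n y1 (g m) * y1 i"
    have "dot n ?y w = dot n y2 w'"
      unfolding w'_def dot_scaled_diff_left dot_scaled_diff_right using nz by (simp add: l_def)
    with y2(2) dual_span_rows_Suc_combination[OF y1(1) y2(1) nz] show ?thesis by metis
  qed
qed

definition unit_rows :: "nat set \<Rightarrow> nat \<Rightarrow> nat \<Rightarrow> 'a::zero_neq_one" where
  "unit_rows J = (\<lambda>j i. if j \<in> J \<and> i = j then 1 else 0)"

lemma unit_rows_in_words: "J \<subseteq> {..<n} \<Longrightarrow> unit_rows J j \<in> words n"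
  by (auto simp: unit_rows_def words_def)

lemma lincomb_unit_rows_outside: "i \<notin> J \<Longrightarrow> lincomb (unit_rows J) m d i = 0"
  unfolding lincomb_def unit_rows_def by (intro sum.neutral) auto

lemma dual_span_unit_rows_iff:
  assumes "J \<subseteq> {..<n}"
  shows "y \<in> dual n (span_rows (unit_rows J) n) \<longleftrightarrow> y \<in> words n \<and> (\<forall>j\<in>J. y j = 0)"
proof -
  have "dot n y (unit_rows J j) = (if j \<in> J then y j else 0)" if "j < n" for j
    using that by (simp add: dot_def unit_rows_def if_distrib[of "\<lambda>x. _ * x"] cong: if_cong)
  with assms show ?thesis by (auto simp: dual_span_rows_iff)
qed

section \<open>Finite sums, density operators and Hamming weights\<close>

lemma sum_indicator_inj_on:
  assumes "finite P" "inj_on f P"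
  shows "(\<Sum>p\<in>P. if w = f p then 1 else 0) = (if w \<in> f ` P then 1 else (0::'b::comm_semiring_1))"
proof (cases "w \<in> f ` P")
  case True
  then obtain p0 where p0: "p0 \<in> P" "w = f p0" by blast
  with assms(2) have "(\<Sum>p\<in>P. if w = f p then 1 else 0) = (\<Sum>p\<in>P. if p = p0 then 1 else (0::'b))"
    by (intro sum.cong) (auto dest: inj_onD)
  with p0 assms(1) True show ?thesis by simp
next
  case False
  then show ?thesis by (auto intro!: sum.neutral)
qed

lemma partial_trace_eq:
  "partial_trace N A R x y = (\<Sum>z\<in>words_on N ({..<N} - A). R (x + z) (y + z))"
  unfolding partial_trace_def plus_fun_def ..

definition mask :: "nat set \<Rightarrow> (nat \<Rightarrow> 'a::zero) \<Rightarrow> nat \<Rightarrow> 'a" where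
  "mask A c = (\<lambda>i. if i \<in> A then c i else 0)"

lemma mask_diff: "mask A (c - c') = mask A c - (mask A c' :: nat \<Rightarrow> 'a::group_add)"
  by (simp add: mask_def fun_eq_iff)

lemma mask_add_mask_compl: "mask A c + mask (- A) c = (c :: nat \<Rightarrow> 'a::monoid_add)"
  by (simp add: mask_def fun_eq_iff)

lemma mask_supported: "t \<in> words_on N A \<Longrightarrow> mask A t = t"
  by (auto simp: words_on_def mask_def fun_eq_iff)

lemma sum_indicator_product_eq_delta:
  assumes "finite I" "x \<in> X" "y \<in> X"
    and unique: "\<forall>x\<in>X. \<exists>!i. i \<in> I \<and> P i x" and functional: "\<And>i x y. P i x \<Longrightarrow> P i y \<Longrightarrow> x = y"
  shows "(\<Sum>i\<in>I. (if P i x then 1 else 0) * (if P i y then 1 else 0)) = (if x = y then 1 else (0::'b::comm_semiring_1))"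
proof (cases "x = y")
  case True
  from unique assms(2) obtain i0 where i0: "i0 \<in> I" "\<And>i. i \<in> I \<Longrightarrow> P i x \<longleftrightarrow> i = i0"
    by metis
  then have "(\<Sum>i\<in>I. (if P i x then 1 else 0) * (if P i x then 1 else 0)) = (\<Sum>i\<in>I. if i = i0 then 1 else (0::'b))"
    by (intro sum.cong) simp_all
  with True i0(1) assms(1) show ?thesis by simp
next
  case False
  with functional have "\<not> (P i x \<and> P i y)" for i by blast
  with False show ?thesis by (auto intro!: sum.neutral)
qed

lemma sum_sum_delta:
  assumes "finite X" "finite Y" "a \<in> X" "b \<in> Y"
  shows "(\<Sum>x\<in>X. \<Sum>y\<in>Y. (if x = a then 1 else 0) * f x y * (if y = b then 1 else 0)) = (f a b :: 'b::comm_semiring_1)"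
proof -
  have "(\<Sum>y\<in>Y. (if x = a then 1 else 0) * f x y * (if y = b then 1 else 0)) = (if x = a then f a b else 0)" for x
    using assms by (cases "x = a") (simp_all add: if_distrib[of "\<lambda>u. _ * u"] sum.delta cong: if_cong)
  with assms show ?thesis by (simp add: sum.delta)
qed

lemma Re_cnj_mult_nonneg: "0 \<le> Re (cnj z * z)"
  using complex_norm_square[of z] by (metis Re_complex_of_real mult.commute zero_le_power2)

lemma sum_if_mem_subset: "finite A \<Longrightarrow> B \<subseteq> A \<Longrightarrow> (\<Sum>x\<in>A. if x \<in> B then g x else 0) = sum g B"
  by (simp add: sum.inter_restrict[symmetric] Int_absorb1)

lemma is_density_uniform_superposition:
  assumes "P \<subseteq> words k" "P \<noteq> {}"
  shows "is_density k (\<lambda>s s'. if s \<in> P \<and> s' \<in> P then 1 / of_nat (card P) else 0)"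
  unfolding is_density_def
proof (intro conjI allI ballI)
  have P: "finite P" "card P \<noteq> 0"
    using assms finite_subset[OF assms(1)] by (auto simp: card_eq_0_iff)
  show "(\<Sum>s\<in>words k. if s \<in> P \<and> s \<in> P then 1 / of_nat (card P) else 0) = (1 :: complex)"
    using assms(1) P by (simp add: sum.If_cases Int_absorb1)
  fix v :: "(nat \<Rightarrow> 'a) \<Rightarrow> complex"
  have "(\<Sum>s\<in>words k. \<Sum>s'\<in>words k. cnj (v s) * (if s \<in> P \<and> s' \<in> P then 1 / of_nat (card P) else 0) * v s')
      = (\<Sum>s\<in>words k. if s \<in> P then
            (\<Sum>s'\<in>words k. if s' \<in> P then cnj (v s) * v s' / of_nat (card P) else 0) else 0)"
    by (auto intro!: sum.cong)
  also have "\<dots> = (\<Sum>s\<in>P. \<Sum>s'\<in>P. cnj (v s) * v s') / of_nat (card P)"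
    using assms(1) by (simp add: sum_if_mem_subset sum_divide_distrib)
  also have "\<dots> = cnj (\<Sum>s\<in>P. v s) * (\<Sum>s\<in>P. v s) / of_nat (card P)"
    by (simp add: sum_product)
  finally show "0 \<le> Re (\<Sum>s\<in>words k. \<Sum>s'\<in>words k. cnj (v s) * (if s \<in> P \<and> s' \<in> P then 1 / of_nat (card P) else 0) * v s')"
    using Re_cnj_mult_nonneg[of "\<Sum>s\<in>P. v s"] by (simp add: Re_divide_of_nat)
qed auto

lemma is_density_uniform_mixture:
  assumes "P \<subseteq> words k" "P \<noteq> {}"
  shows "is_density k (\<lambda>s s'. if s = s' \<and> s \<in> P then 1 / of_nat (card P) else 0)"
  unfolding is_density_def
proof (intro conjI allI ballI)
  have P: "finite P" "card P \<noteq> 0"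
    using assms finite_subset[OF assms(1)] by (auto simp: card_eq_0_iff)
  show "(\<Sum>s\<in>words k. if s = s \<and> s \<in> P then 1 / of_nat (card P) else 0) = (1 :: complex)"
    using assms(1) P by (simp add: sum.If_cases Int_absorb1)
  fix v :: "(nat \<Rightarrow> 'a) \<Rightarrow> complex"
  have "(\<Sum>s\<in>words k. \<Sum>s'\<in>words k. cnj (v s) * (if s = s' \<and> s \<in> P then 1 / of_nat (card P) else 0) * v s')
      = (\<Sum>s\<in>words k. if s \<in> P then cnj (v s) * v s / of_nat (card P) else 0)"
    by (intro sum.cong)
       (auto simp: if_distrib[of "\<lambda>u. _ * u"] if_distrib[of "\<lambda>u. u * _"] sum.delta' cong: if_cong)
  also have "\<dots> = (\<Sum>s\<in>P. cnj (v s) * v s) / of_nat (card P)"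
    using assms(1) by (simp add: sum_if_mem_subset sum_divide_distrib)
  finally have "(\<Sum>s\<in>words k. \<Sum>s'\<in>words k. cnj (v s) * (if s = s' \<and> s \<in> P then 1 / of_nat (card P) else 0) * v s')
      = (\<Sum>s\<in>P. cnj (v s) * v s) / of_nat (card P)" .
  moreover have "0 \<le> Re (\<Sum>s\<in>P. cnj (v s) * v s)"
    by (simp add: Re_sum sum_nonneg Re_cnj_mult_nonneg)
  ultimately show "0 \<le> Re (\<Sum>s\<in>words k. \<Sum>s'\<in>words k. cnj (v s) * (if s = s' \<and> s \<in> P then 1 / of_nat (card P) else 0) * v s')"
    by (simp add: Re_divide_of_nat)
qed auto

lemma wt_le: "wt n x \<le> n"
  unfolding wt_def by (rule order_trans[OF card_mono[of "{..<n}"]]) auto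

lemma wt_le_if_vanishes:
  assumes "J \<subseteq> {..<n}" "\<forall>i\<in>J. x i = 0"
  shows "wt n x \<le> n - card J"
proof -
  have "wt n x \<le> card ({..<n} - J)"
    unfolding wt_def using assms(2) by (intro card_mono) auto
  also have "\<dots> = n - card J"
    using assms(1) by (simp add: card_Diff_subset finite_subset)
  finally show ?thesis .
qed

lemma exists_vanishing_subset:
  assumes "wt n x \<le> n - \<tau>" "\<tau> \<le> n"
  obtains J where "J \<subseteq> {..<n}" "card J = \<tau>" "\<forall>i\<in>J. x i = 0"
proof -
  have "card ({..<n} - {i. i < n \<and> x i \<noteq> 0}) = n - wt n x"
    unfolding wt_def by (subst card_Diff_subset) auto
  with assms wt_le[of n x] have "\<tau> \<le> card ({..<n} - {i. i < n \<and> x i \<noteq> 0})"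
    by linarith
  then obtain J where "J \<subseteq> {..<n} - {i. i < n \<and> x i \<noteq> 0}" "card J = \<tau>"
    by (rule obtain_subset_with_card_n)
  then show ?thesis using that by auto
qed

lemma all_subsets_meet_supports_iff:
  assumes "X \<noteq> {}" "\<tau> \<le> n"
  shows "(\<forall>J. J \<subseteq> {..<n} \<and> card J = \<tau> \<longrightarrow> (\<forall>x\<in>X. \<exists>i\<in>J. x i \<noteq> 0)) \<longleftrightarrow> n < \<tau> + Min (wt n ` X)"
proof -
  have fin: "finite (wt n ` X)"
    by (rule finite_subset[of _ "{..n}"]) (auto simp: wt_le)
  obtain x where x: "x \<in> X" "wt n x = Min (wt n ` X)"
    using Min_in[OF fin] assms(1) by fastforce
  show ?thesis
  proof
    assume all: "\<forall>J. J \<subseteq> {..<n} \<and> card J = \<tau> \<longrightarrow> (\<forall>x\<in>X. \<exists>i\<in>J. x i \<noteq> 0)"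
    show "n < \<tau> + Min (wt n ` X)"
    proof (rule ccontr)
      assume "\<not> n < \<tau> + Min (wt n ` X)"
      with x(2) have "wt n x \<le> n - \<tau>" by linarith
      then obtain J where "J \<subseteq> {..<n}" "card J = \<tau>" "\<forall>i\<in>J. x i = 0"
        using assms(2) by (rule exists_vanishing_subset)
      with all x(1) show False by blast
    qed
  next
    assume less: "n < \<tau> + Min (wt n ` X)"
    show "\<forall>J. J \<subseteq> {..<n} \<and> card J = \<tau> \<longrightarrow> (\<forall>x\<in>X. \<exists>i\<in>J. x i \<noteq> 0)"
    proof (intro allI impI ballI)
      fix J y assume J: "J \<subseteq> {..<n} \<and> card J = \<tau>" and "y \<in> X"
      show "\<exists>i\<in>J. y i \<noteq> 0"
      proof (rule ccontr)
        assume "\<not> (\<exists>i\<in>J. y i \<noteq> 0)"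
        with J have "wt n y \<le> n - \<tau>" using wt_le_if_vanishes[of J n y] by auto
        moreover have "Min (wt n ` X) \<le> wt n y" using fin \<open>y \<in> X\<close> by simp
        ultimately show False using less assms(2) by linarith
      qed
    qed
  qed
qed

section \<open>The cosets of an ECSS code\<close>

locale ecss =
  fixes n f0 f1 e :: nat and gQ gF1 GE :: "nat \<Rightarrow> nat \<Rightarrow> 'a::{finite,field}"
  assumes f1_less_f0: "f1 < f0"
    and gQ_words: "\<forall>k<f0 - f1. gQ k \<in> words n"
    and gF1_words: "\<forall>k<f1. gF1 k \<in> words n"
    and indep: "lin_indep_rows (stack gQ (f0 - f1) gF1) f0"
    and GE_words: "\<forall>k<e. GE k \<in> words n"
    and F0_inter_E: "span_rows (stack gQ (f0 - f1) gF1) f0 \<inter> span_rows GE e = {(\<lambda>_. 0)}"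
begin

abbreviation "S \<equiv> words (f0 - f1) :: (nat \<Rightarrow> 'a) set"
abbreviation "N \<equiv> n + e"
abbreviation "F0 \<equiv> span_rows (stack gQ (f0 - f1) gF1) f0"
abbreviation "F1 \<equiv> span_rows gF1 f1"
abbreviation "Q s \<equiv> lincomb gQ (f0 - f1) s"

lemma lincomb_F0_rows: "lincomb (stack gQ (f0 - f1) gF1) f0 c = Q c + lincomb gF1 f1 (\<lambda>k. c (f0 - f1 + k))"
  using lincomb_stack[of gQ "f0 - f1" gF1 f1 c] f1_less_f0 by simp

lemma F0_eq: "F0 = set_plus_vec (span_rows gQ (f0 - f1)) F1"
  using span_rows_stack[of gQ "f0 - f1" gF1 f1] f1_less_f0 by simp

lemma lincomb_gF1_eq_0:
  assumes "lincomb gF1 f1 r = 0" "k < f1"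
  shows "r k = 0"
proof -
  let ?c = "\<lambda>j. if j < f0 - f1 then 0 else r (j - (f0 - f1))"
  have "lincomb (stack gQ (f0 - f1) gF1) f0 ?c = 0"
    using assms(1) by (simp add: lincomb_F0_rows lincomb_eq_0)
  then have "\<forall>j<f0. ?c j = 0"
    using indep unfolding lin_indep_rows_def zero_fun_def by blast
  moreover have "f0 - f1 + k < f0" using assms(2) f1_less_f0 by linarith
  ultimately show ?thesis by auto
qed

text \<open>This is where the hypothesis \<open>F\<^sub>0 \<inter> E = {0}\<close> enters.\<close>

lemma Q_in_F1_plus_E:
  assumes "s \<in> S" "Q s \<in> set_plus_vec F1 (span_rows GE e)"
  shows "s = 0"
proof -
  obtain r d where eq: "Q s = lincomb gF1 f1 r + lincomb GE e d"
    using assms(2) by (auto simp: set_plus_vec_iff span_rows_iff)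
  define c where "c = (\<lambda>k. if k < f0 - f1 then s k else - r (k - (f0 - f1)))"
  have "Q c = Q s" by (rule lincomb_cong) (simp add: c_def)
  then have "lincomb (stack gQ (f0 - f1) gF1) f0 c = Q s - lincomb gF1 f1 r"
    unfolding lincomb_F0_rows by (simp add: c_def lincomb_uminus)
  also have "\<dots> = lincomb GE e d" using eq by simp
  finally have "lincomb (stack gQ (f0 - f1) gF1) f0 c \<in> F0 \<inter> span_rows GE e"
    by (metis IntI lincomb_in_span_rows)
  then have "lincomb (stack gQ (f0 - f1) gF1) f0 c = (\<lambda>_. 0)"
    using F0_inter_E by blast
  then have "\<forall>k<f0. c k = 0"
    using indep unfolding lin_indep_rows_def by blast
  show ?thesis
  proof
    fix k
    show "s k = 0 k"
      using spec[OF \<open>\<forall>k<f0. c k = 0\<close>, of k] assms(1)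
      by (cases "k < f0 - f1") (auto simp: c_def words_def)
  qed
qed

definition basis_word :: "(nat \<Rightarrow> 'a) \<Rightarrow> (nat \<Rightarrow> 'a) \<Rightarrow> (nat \<Rightarrow> 'a) \<Rightarrow> nat \<Rightarrow> 'a" where
  "basis_word s r1 r2 = join_word n (ecss_cw f0 f1 e gQ gF1 GE s r1 r2) r2"

text \<open>\<open>coset s\<close> is the coset \<open>(s G\<^bsub>F\<^sub>0/F\<^sub>1\<^esub>, 0) + C\<^sub>1\<close> of the paper, the support of the encoding of \<open>|s\<rangle>\<close>.\<close>

definition coset :: "(nat \<Rightarrow> 'a) \<Rightarrow> (nat \<Rightarrow> 'a) set" where
  "coset s = {basis_word s r1 r2 | r1 r2. r1 \<in> words f1 \<and> r2 \<in> words e}"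

lemma basis_word_below:
  "i < n \<Longrightarrow> basis_word s r1 r2 i = (Q s + lincomb gF1 f1 r1 + lincomb GE e r2) i"
  by (simp add: basis_word_def join_word_def ecss_cw_def lincomb_def)

lemma basis_word_above: "basis_word s r1 r2 (n + k) = r2 k"
  by (simp add: basis_word_def join_word_def)

lemma basis_word_add: "basis_word (s + s') (r1 + r1') (r2 + r2') = basis_word s r1 r2 + basis_word s' r1' r2'"
  by (simp add: basis_word_def join_word_def ecss_cw_def fun_eq_iff sum.distrib distrib_right)

lemma basis_word_diff: "basis_word (s - s') (r1 - r1') (r2 - r2') = basis_word s r1 r2 - basis_word s' r1' r2'"
  by (simp add: basis_word_def join_word_def ecss_cw_def fun_eq_iff sum_subtractf left_diff_distrib)

lemma basis_word_inj:
  assumes "r1 \<in> words f1" "r2 \<in> words e" "r1' \<in> words f1" "r2' \<in> words e"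
    and "basis_word s r1 r2 = basis_word s r1' r2'"
  shows "r1 = r1' \<and> r2 = r2'"
proof -
  have w0: "basis_word 0 (r1 - r1') (r2 - r2') = 0"
    using basis_word_diff[of s s r1 r1' r2 r2'] assms(5) by simp
  then have "r2 - r2' = 0"
    using basis_word_above[of 0 "r1 - r1'" "r2 - r2'"] by (simp add: fun_eq_iff)
  moreover have "lincomb gF1 f1 (r1 - r1') = 0"
  proof
    fix i
    show "lincomb gF1 f1 (r1 - r1') i = 0 i"
    proof (cases "i < n")
      case True
      with w0 \<open>r2 - r2' = 0\<close> show ?thesis
        using basis_word_below[OF True, of 0 "r1 - r1'" "r2 - r2'"] by (simp add: lincomb_eq_0)
    next
      case False
      with lincomb_in_words[OF gF1_words] show ?thesis by (simp add: words_def)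
    qed
  qed
  then have "r1 - r1' = 0"
  proof (intro ext)
    fix k
    show "(r1 - r1') k = 0 k"
      using lincomb_gF1_eq_0[OF \<open>lincomb gF1 f1 (r1 - r1') = 0\<close>, of k] assms(1,3)
      by (cases "k < f1") (simp_all add: words_def)
  qed
  ultimately show ?thesis by simp
qed

lemma basis_word_in_words: "r2 \<in> words e \<Longrightarrow> basis_word s r1 r2 \<in> words N"
  by (simp add: basis_word_def join_word_def words_def)

lemma coset_add: "w \<in> coset s \<Longrightarrow> w' \<in> coset s' \<Longrightarrow> w + w' \<in> coset (s + s')"
  unfolding coset_def by (force simp: basis_word_add[symmetric] intro: words_add)

lemma coset_diff: "w \<in> coset s \<Longrightarrow> w' \<in> coset s' \<Longrightarrow> w - w' \<in> coset (s - s')"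
  unfolding coset_def by (force simp: basis_word_diff[symmetric] intro: words_diff)

lemma coset_subset_words: "coset s \<subseteq> words N"
  unfolding coset_def using basis_word_in_words by blast

lemma coset_eq_image: "coset s = (\<lambda>(r1, r2). basis_word s r1 r2) ` (words f1 \<times> words e)"
  unfolding coset_def by auto

lemma inj_on_basis_word: "inj_on (\<lambda>(r1, r2). basis_word s r1 r2) (words f1 \<times> words e)"
  using basis_word_inj by (auto simp: inj_on_def)

lemma finite_coset [simp]: "finite (coset s)"
  by (simp add: coset_eq_image)

lemma card_coset: "card (coset s) = card (UNIV :: 'a set) ^ (f1 + e)"
  by (simp add: coset_eq_image card_image[OF inj_on_basis_word] card_cartesian_product
      card_words power_add)

definition amp :: complex where
  "amp = 1 / complex_of_real (sqrt (real (card (UNIV :: 'a set) ^ (f1 + e))))"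

lemma cnj_amp [simp]: "cnj amp = amp"
  by (simp add: amp_def)

lemma amp_normalized: "amp * amp * of_nat (card (coset s)) = 1"
proof -
  have pos: "0 < real (card (UNIV :: 'a set) ^ (f1 + e))"
    by (simp add: finite_UNIV_card_ge_0)
  have "amp * amp = complex_of_real (1 / real (card (UNIV :: 'a set) ^ (f1 + e)))"
    unfolding amp_def using pos
    by (simp add: of_real_mult[symmetric] del: of_real_mult of_real_power of_real_of_nat_eq)
  with pos show ?thesis by (simp add: card_coset del: of_nat_power)
qed

lemma ecss_enc_eq: "ecss_enc n f0 f1 e gQ gF1 GE s w = (if w \<in> coset s then amp else 0)"
proof -
  have "(\<Sum>r1\<in>words f1. \<Sum>r2\<in>words e. if w = basis_word s r1 r2 then 1 else 0)
      = (\<Sum>p\<in>words f1 \<times> words e. if w = (\<lambda>(r1, r2). basis_word s r1 r2) p then 1 else (0::complex))"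
    by (simp add: sum.cartesian_product case_prod_beta')
  also have "\<dots> = (if w \<in> coset s then 1 else 0)"
    by (simp add: sum_indicator_inj_on inj_on_basis_word coset_eq_image)
  finally show ?thesis
    by (simp add: ecss_enc_def basis_word_def amp_def)
qed

lemma ecss_rho_eq:
  "ecss_rho n f0 f1 e gQ gF1 GE \<rho> w w' =
     (\<Sum>s\<in>S. \<Sum>s'\<in>S. \<rho> s s' * (if w \<in> coset s then amp else 0) * (if w' \<in> coset s' then amp else 0))"
  by (simp add: ecss_rho_def ecss_enc_eq if_distrib[of cnj] cong: if_cong)

abbreviation "env A \<equiv> words_on N ({..<N} - A) :: (nat \<Rightarrow> 'a) set"

lemma partial_trace_ecss_rho:
  "partial_trace N A (ecss_rho n f0 f1 e gQ gF1 GE \<rho>) x y =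
     (\<Sum>z\<in>env A. \<Sum>s\<in>S. \<Sum>s'\<in>S.
        \<rho> s s' * (if x + z \<in> coset s then amp else 0) * (if y + z \<in> coset s' then amp else 0))"
  by (simp add: partial_trace_eq ecss_rho_eq)

text \<open>Extending \<open>y\<close> by \<open>-y G\<^sub>E\<^sup>T\<close> on the last \<open>e\<close> qudits cancels the contribution of the randomness
  \<open>r\<^sub>2\<close>, so the resulting functional is constant on each coset.\<close>

definition dual_extension :: "(nat \<Rightarrow> 'a) \<Rightarrow> nat \<Rightarrow> 'a" where
  "dual_extension y = (\<lambda>i. if i < n then y i else - dot n y (GE (i - n)))"

lemma dot_dual_extension:
  "dot N (dual_extension y) w = dot n y w - (\<Sum>k<e. dot n y (GE k) * w (n + k))"
  unfolding dot_split_length by (simp add: dual_extension_def dot_def sum_negf)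

lemma dot_dual_extension_basis_word:
  assumes "y \<in> dual n F1"
  shows "dot N (dual_extension y) (basis_word s r1 r2) = dot n y (Q s)"
proof -
  have "dot n y (basis_word s r1 r2) = dot n y (Q s + lincomb gF1 f1 r1 + lincomb GE e r2)"
    unfolding dot_def by (intro sum.cong) (simp_all add: basis_word_below)
  also have "\<dots> = dot n y (Q s) + (\<Sum>k<e. dot n y (GE k) * r2 k)"
    using assms by (simp add: dot_add_right dual_iff_dot) (simp add: dot_lincomb_right mult.commute)
  finally show ?thesis by (simp add: dot_dual_extension basis_word_above)
qed

end

section \<open>Recovery\<close>

text \<open>The Kraus operator indexed by \<open>t\<close> sends \<open>|\<sigma> s + t\<rangle>\<close> to \<open>|s\<rangle>\<close> when \<open>t\<close> is the \<open>A\<close>-part of a word of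
  \<open>coset 0\<close>, and \<open>|t\<rangle>\<close> to \<open>|0\<rangle>\<close> when \<open>t\<close> is not recoverable. The recoverable words split uniquely as
  \<open>\<sigma> s + t\<close>, which makes the family complete.\<close>

locale ecss_recovery = ecss n f0 f1 e gQ gF1 GE
  for n f0 f1 e :: nat and gQ gF1 GE :: "nat \<Rightarrow> nat \<Rightarrow> 'a::{finite,field}" +
  fixes A :: "nat set" and \<sigma> :: "(nat \<Rightarrow> 'a) \<Rightarrow> nat \<Rightarrow> 'a"
  assumes secret_visible_on_A: "\<And>s w. s \<in> S \<Longrightarrow> w \<in> coset s \<Longrightarrow> \<forall>i\<in>A. w i = 0 \<Longrightarrow> s = 0"
    and \<sigma>_in_coset: "\<And>s. s \<in> S \<Longrightarrow> \<sigma> s \<in> coset s"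
    and \<sigma>_supported: "\<And>s. s \<in> S \<Longrightarrow> \<sigma> s \<in> words_on N A"
begin

definition local_parts :: "(nat \<Rightarrow> 'a) set" where
  "local_parts = mask A ` coset 0"

definition recoverable :: "(nat \<Rightarrow> 'a) set" where
  "recoverable = {\<sigma> s + t | s t. s \<in> S \<and> t \<in> local_parts}"

definition kraus_rel :: "(nat \<Rightarrow> 'a) \<Rightarrow> (nat \<Rightarrow> 'a) \<Rightarrow> (nat \<Rightarrow> 'a) \<Rightarrow> bool" where
  "kraus_rel t s x \<longleftrightarrow> t \<in> local_parts \<and> x = \<sigma> s + t \<or> t \<notin> recoverable \<and> s = 0 \<and> x = t"

definition kraus :: "(nat \<Rightarrow> 'a) \<Rightarrow> (nat \<Rightarrow> 'a) \<Rightarrow> (nat \<Rightarrow> 'a) \<Rightarrow> complex" where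
  "kraus t s x = (if kraus_rel t s x then 1 else 0)"

lemma local_parts_diff:
  assumes "t \<in> local_parts" "t' \<in> local_parts"
  shows "t - t' \<in> local_parts"
proof -
  obtain c c' where c: "c \<in> coset 0" "c' \<in> coset 0" "t = mask A c" "t' = mask A c'"
    using assms by (auto simp: local_parts_def)
  then have "c - c' \<in> coset 0" using coset_diff[of c 0 c' 0] by simp
  with c(3,4) show ?thesis by (auto simp: local_parts_def mask_diff[symmetric])
qed

lemma local_parts_supported: "t \<in> local_parts \<Longrightarrow> t \<in> words_on N A"
  using coset_subset_words[of 0] by (auto simp: local_parts_def words_on_def mask_def words_def)

lemma local_parts_subset_recoverable: "local_parts \<subseteq> recoverable"
proof
  fix t assume t: "t \<in> local_parts"
  have "\<sigma> 0 = mask A (\<sigma> 0)" using \<sigma>_supported[of 0] by (simp add: mask_supported)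
  then have "\<sigma> 0 \<in> local_parts"
    using \<sigma>_in_coset[of 0] unfolding local_parts_def by (metis image_eqI zero_in_words(1))
  with t have "t - \<sigma> 0 \<in> local_parts" by (rule local_parts_diff)
  moreover have "t = \<sigma> 0 + (t - \<sigma> 0)" by simp
  ultimately show "t \<in> recoverable" unfolding recoverable_def using zero_in_words(1) by blast
qed

text \<open>The word of \<open>coset (s - s')\<close> that witnesses the collision vanishes on \<open>A\<close>.\<close>

lemma \<sigma>_add_local_part_inj:
  assumes "s \<in> S" "s' \<in> S" "t \<in> local_parts" "t' \<in> local_parts" "\<sigma> s + t = \<sigma> s' + t'"
  shows "s = s'"
proof -
  obtain c where c: "c \<in> coset 0" "mask A c = t' - t"
    using local_parts_diff[OF assms(4,3)] by (auto simp: local_parts_def)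
  have "\<sigma> s - \<sigma> s' - c \<in> coset (s - s' - 0)"
    using assms(1,2) c(1) by (intro coset_diff \<sigma>_in_coset)
  moreover have "\<forall>i\<in>A. (\<sigma> s - \<sigma> s' - c) i = 0"
  proof
    fix i assume "i \<in> A"
    then have "c i = t' i - t i" using fun_cong[OF c(2), of i] by (simp add: mask_def)
    then have "(\<sigma> s - \<sigma> s' - c) i = (\<sigma> s + t) i - (\<sigma> s' + t') i" by (simp add: algebra_simps)
    with assms(5) show "(\<sigma> s - \<sigma> s' - c) i = 0" by simp
  qed
  moreover have "s - s' - 0 \<in> S" using assms(1,2) by (simp add: words_diff)
  ultimately have "s - s' - 0 = 0" by (rule secret_visible_on_A[rotated])
  then show ?thesis by simp
qed

lemma coset_shift_iff:
  assumes "s \<in> S" "s0 \<in> S" "t \<in> local_parts" "z \<in> env A"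
  shows "\<sigma> s0 + t + z \<in> coset s \<longleftrightarrow> s = s0 \<and> t + z \<in> coset 0"
proof
  assume h: "\<sigma> s0 + t + z \<in> coset s"
  obtain c where c: "c \<in> coset 0" "mask A c = t"
    using assms(3) by (auto simp: local_parts_def)
  have "\<sigma> s0 + t + z - \<sigma> s0 - c \<in> coset (s - s0 - 0)"
    by (rule coset_diff[OF coset_diff[OF h \<sigma>_in_coset[OF assms(2)]] c(1)])
  moreover have "\<forall>i\<in>A. (\<sigma> s0 + t + z - \<sigma> s0 - c) i = 0"
  proof
    fix i assume "i \<in> A"
    with fun_cong[OF c(2), of i] assms(4) have "t i = c i" "z i = 0"
      by (simp_all add: mask_def words_on_complement_iff)
    then show "(\<sigma> s0 + t + z - \<sigma> s0 - c) i = 0" by simp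
  qed
  moreover have "s - s0 - 0 \<in> S" using assms(1,2) by (simp add: words_diff)
  ultimately have "s - s0 - 0 = 0" by (rule secret_visible_on_A[rotated])
  moreover have "t + z \<in> coset (s - s0)"
    using coset_diff[OF h \<sigma>_in_coset[OF assms(2)]] by (simp add: algebra_simps)
  ultimately show "s = s0 \<and> t + z \<in> coset 0" by simp
next
  assume "s = s0 \<and> t + z \<in> coset 0"
  then show "\<sigma> s0 + t + z \<in> coset s"
    using coset_add[OF \<sigma>_in_coset[OF assms(2)], of "t + z" 0] by (simp add: add.assoc)
qed

lemma unrecoverable_notin_coset:
  assumes "t \<in> words_on N A" "t \<notin> recoverable" "z \<in> env A" "s \<in> S"
  shows "t + z \<notin> coset s"
proof
  assume "t + z \<in> coset s"
  then have "t + z - \<sigma> s \<in> coset 0"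
    using coset_diff[OF _ \<sigma>_in_coset[OF assms(4)], of "t + z" s] by simp
  moreover have "mask A (t + z - \<sigma> s) = t - \<sigma> s"
    using assms(1,3) \<sigma>_supported[OF assms(4)]
    by (auto simp: mask_def words_on_iff words_on_complement_iff fun_eq_iff)
  ultimately have "t - \<sigma> s \<in> local_parts" unfolding local_parts_def by (metis image_eqI)
  then have "\<sigma> s + (t - \<sigma> s) \<in> recoverable" using assms(4) unfolding recoverable_def by blast
  with assms(2) show False by simp
qed

lemma kraus_rel_unique:
  assumes "x \<in> words_on N A"
  shows "\<exists>!p. p \<in> words_on N A \<times> S \<and> kraus_rel (fst p) (snd p) x"
proof (cases "x \<in> recoverable")
  case True
  then obtain s1 t1 where st: "s1 \<in> S" "t1 \<in> local_parts" "x = \<sigma> s1 + t1"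
    unfolding recoverable_def by blast
  have "p = (t1, s1)" if "p \<in> words_on N A \<times> S" "kraus_rel (fst p) (snd p) x" for p
  proof -
    have "fst p \<in> local_parts" "\<sigma> (snd p) + fst p = \<sigma> s1 + t1"
      using that True st(3) by (auto simp: kraus_rel_def)
    moreover from this have "snd p = s1"
      using \<sigma>_add_local_part_inj st(1,2) that(1) by (metis mem_Sigma_iff prod.collapse)
    ultimately show ?thesis by (simp add: prod_eq_iff)
  qed
  moreover have "(t1, s1) \<in> words_on N A \<times> S" "kraus_rel t1 s1 x"
    using st local_parts_supported by (auto simp: kraus_rel_def)
  ultimately show ?thesis by (metis fst_conv snd_conv)
next
  case False
  have "p = (x, 0)" if "p \<in> words_on N A \<times> S" "kraus_rel (fst p) (snd p) x" for p
  proof -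
    have "\<not> (fst p \<in> local_parts \<and> x = \<sigma> (snd p) + fst p)"
      using False that(1) unfolding recoverable_def by (cases p) auto
    with that show ?thesis by (auto simp: kraus_rel_def prod_eq_iff)
  qed
  moreover have "(x, 0) \<in> words_on N A \<times> S" "kraus_rel x 0 x"
    using assms False by (auto simp: kraus_rel_def)
  ultimately show ?thesis by (metis fst_conv snd_conv)
qed

lemma cnj_kraus [simp]: "cnj (kraus t s x) = kraus t s x"
  by (simp add: kraus_def)

lemma kraus_complete:
  assumes "x \<in> words_on N A" "y \<in> words_on N A"
  shows "(\<Sum>t\<in>words_on N A. \<Sum>s\<in>S. cnj (kraus t s x) * kraus t s y) = (if x = y then 1 else 0)"
proof -
  have "(\<Sum>t\<in>words_on N A. \<Sum>s\<in>S. cnj (kraus t s x) * kraus t s y)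
      = (\<Sum>p\<in>words_on N A \<times> S. (if kraus_rel (fst p) (snd p) x then 1 else 0)
                                  * (if kraus_rel (fst p) (snd p) y then 1 else 0))"
    unfolding cnj_kraus by (simp add: kraus_def sum.cartesian_product case_prod_beta')
  also have "\<dots> = (if x = y then 1 else 0)"
    by (rule sum_indicator_product_eq_delta[OF _ assms])
       (use kraus_rel_unique local_parts_subset_recoverable in \<open>auto simp: kraus_rel_def\<close>)
  finally show ?thesis .
qed

lemma partial_trace_\<sigma>:
  assumes "s0 \<in> S" "s0' \<in> S" "t \<in> local_parts"
  shows "partial_trace N A (ecss_rho n f0 f1 e gQ gF1 GE \<rho>) (\<sigma> s0 + t) (\<sigma> s0' + t)
    = \<rho> s0 s0' * amp * amp * of_nat (card {z \<in> env A. t + z \<in> coset 0})"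
proof -
  have "(\<Sum>s\<in>S. \<Sum>s'\<in>S. \<rho> s s' * (if \<sigma> s0 + t + z \<in> coset s then amp else 0)
                                  * (if \<sigma> s0' + t + z \<in> coset s' then amp else 0))
      = (if t + z \<in> coset 0 then \<rho> s0 s0' * amp * amp else 0)" if "z \<in> env A" for z
  proof -
    have "(\<Sum>s\<in>S. \<Sum>s'\<in>S. \<rho> s s' * (if \<sigma> s0 + t + z \<in> coset s then amp else 0)
                                    * (if \<sigma> s0' + t + z \<in> coset s' then amp else 0))
        = (\<Sum>s\<in>S. \<Sum>s'\<in>S. (if s = s0 then 1 else 0)
             * (if t + z \<in> coset 0 then \<rho> s s' * amp * amp else 0) * (if s' = s0' then 1 else 0))"
      using assms that by (intro sum.cong refl) (auto simp: coset_shift_iff)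
    also have "\<dots> = (if t + z \<in> coset 0 then \<rho> s0 s0' * amp * amp else 0)"
      using assms by (simp add: sum_sum_delta)
    finally show ?thesis .
  qed
  then have "partial_trace N A (ecss_rho n f0 f1 e gQ gF1 GE \<rho>) (\<sigma> s0 + t) (\<sigma> s0' + t)
      = (\<Sum>z\<in>env A. if t + z \<in> coset 0 then \<rho> s0 s0' * amp * amp else 0)"
    by (simp add: partial_trace_ecss_rho)
  also have "\<dots> = \<rho> s0 s0' * amp * amp * of_nat (card {z \<in> env A. t + z \<in> coset 0})"
    by (simp add: sum.If_cases Int_def)
  finally show ?thesis .
qed

lemma partial_trace_unrecoverable:
  assumes "t \<in> words_on N A" "t \<notin> recoverable"
  shows "partial_trace N A (ecss_rho n f0 f1 e gQ gF1 GE \<rho>) t t = 0"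
  using unrecoverable_notin_coset[OF assms] by (simp add: partial_trace_ecss_rho)

text \<open>The words of \<open>coset 0\<close> are partitioned by their \<open>A\<close>-parts.\<close>

lemma sum_card_local_fibres: "(\<Sum>t\<in>local_parts. card {z \<in> env A. t + z \<in> coset 0}) = card (coset 0)"
proof -
  have "card {z \<in> env A. t + z \<in> coset 0} = card {c \<in> coset 0. mask A c = t}" if "t \<in> local_parts" for t
  proof -
    have t: "t \<in> words_on N A" using that by (rule local_parts_supported)
    have "(\<lambda>z. t + z) ` {z \<in> env A. t + z \<in> coset 0} = {c \<in> coset 0. mask A c = t}"
    proof (intro equalityI subsetI)
      fix c assume "c \<in> (\<lambda>z. t + z) ` {z \<in> env A. t + z \<in> coset 0}"
      with t show "c \<in> {c \<in> coset 0. mask A c = t}"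
        by (auto simp: mask_def words_on_iff words_on_complement_iff fun_eq_iff)
    next
      fix c assume c: "c \<in> {c \<in> coset 0. mask A c = t}"
      then have "c = t + mask (- A) c" "mask (- A) c \<in> env A"
        using mask_add_mask_compl[of A c] coset_subset_words
        by (auto simp: mask_def words_on_complement_iff words_def)
      with c show "c \<in> (\<lambda>z. t + z) ` {z \<in> env A. t + z \<in> coset 0}" by auto
    qed
    then show ?thesis by (metis (no_types, lifting) add_left_cancel card_image inj_onI)
  qed
  then have "(\<Sum>t\<in>local_parts. card {z \<in> env A. t + z \<in> coset 0})
      = (\<Sum>t\<in>local_parts. \<Sum>c\<in>{c \<in> coset 0. mask A c = t}. 1)"
    by simp
  also have "\<dots> = (\<Sum>c\<in>coset 0. 1)"
    by (rule sum.group) (auto simp: local_parts_def)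
  finally show ?thesis by simp
qed

lemma kraus_recovers:
  assumes "s0 \<in> S" "s0' \<in> S"
  shows "(\<Sum>t\<in>words_on N A. \<Sum>x\<in>words_on N A. \<Sum>y\<in>words_on N A.
            kraus t s0 x * partial_trace N A (ecss_rho n f0 f1 e gQ gF1 GE \<rho>) x y * cnj (kraus t s0' y))
         = \<rho> s0 s0'"
proof -
  let ?PT = "partial_trace N A (ecss_rho n f0 f1 e gQ gF1 GE \<rho>)"
  have "(\<Sum>x\<in>words_on N A. \<Sum>y\<in>words_on N A. kraus t s0 x * ?PT x y * cnj (kraus t s0' y))
      = (if t \<in> local_parts then ?PT (\<sigma> s0 + t) (\<sigma> s0' + t) else 0)" if "t \<in> words_on N A" for t
  proof (cases "t \<in> local_parts")
    case True
    then have "kraus t s x = (if x = \<sigma> s + t then 1 else 0)" for s x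
      using local_parts_subset_recoverable by (auto simp: kraus_def kraus_rel_def)
    moreover have "\<sigma> s + t \<in> words_on N A" if "s \<in> S" for s
      using True that \<sigma>_supported local_parts_supported words_on_add by blast
    ultimately show ?thesis
      unfolding cnj_kraus using True assms by (simp add: sum_sum_delta)
  next
    case False
    then have "kraus t s x = (if t \<notin> recoverable \<and> s = 0 then 1 else 0) * (if x = t then 1 else 0)" for s x
      by (auto simp: kraus_def kraus_rel_def)
    with False that show ?thesis
      unfolding cnj_kraus by (simp add: sum_sum_delta partial_trace_unrecoverable)
  qed
  then have "(\<Sum>t\<in>words_on N A. \<Sum>x\<in>words_on N A. \<Sum>y\<in>words_on N A. kraus t s0 x * ?PT x y * cnj (kraus t s0' y))
      = (\<Sum>t\<in>local_parts. ?PT (\<sigma> s0 + t) (\<sigma> s0' + t))"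
    using local_parts_supported by (simp add: sum.If_cases Int_absorb1 subsetI)
  also have "\<dots> = \<rho> s0 s0' * amp * amp * of_nat (card (coset 0))"
    using assms by (simp add: partial_trace_\<sigma> sum_distrib_left[symmetric] sum_card_local_fibres flip: of_nat_sum)
  also have "\<dots> = \<rho> s0 s0'"
    using amp_normalized[of 0] by (simp add: mult.assoc)
  finally show ?thesis .
qed

end

context ecss
begin

theorem ecss_authorized_if_recoverable:
  assumes visible: "\<And>s w. s \<in> S \<Longrightarrow> w \<in> coset s \<Longrightarrow> \<forall>i\<in>A. w i = 0 \<Longrightarrow> s = 0"
    and localizable: "\<And>s. s \<in> S \<Longrightarrow> \<exists>w\<in>coset s. w \<in> words_on N A"
  shows "ecss_authorized n f0 f1 e gQ gF1 GE A"
proof -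
  obtain \<sigma> where \<sigma>: "\<And>s. s \<in> S \<Longrightarrow> \<sigma> s \<in> coset s \<and> \<sigma> s \<in> words_on N A"
    using localizable by metis
  interpret ecss_recovery n f0 f1 e gQ gF1 GE A \<sigma>
    by unfold_locales (use visible \<sigma> in auto)
  define m where "m = card (words_on N A :: (nat \<Rightarrow> 'a) set)"
  obtain h :: "nat \<Rightarrow> nat \<Rightarrow> 'a" where h: "bij_betw h {..<m} (words_on N A)"
    using ex_bij_betw_nat_finite[OF finite_words_on] by (auto simp: m_def atLeast0LessThan)
  show ?thesis
    unfolding ecss_authorized_def
  proof (intro exI[of _ "m"] exI[of _ "\<lambda>i. kraus (h i)"] conjI allI impI ballI)
    fix x y :: "nat \<Rightarrow> 'a" assume "x \<in> words_on N A" "y \<in> words_on N A"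
    then show "(\<Sum>i<m. \<Sum>s\<in>S. cnj (kraus (h i) s x) * kraus (h i) s y)
        = (if x = y then 1 else 0)"
      by (simp only: sum.reindex_bij_betw[OF h, where g = "\<lambda>t. \<Sum>s\<in>S. cnj (kraus t s x) * kraus t s y"]
          kraus_complete)
  next
    fix \<rho> s s' assume "s \<in> S" "s' \<in> S"
    then show "(\<Sum>i<m. \<Sum>x\<in>words_on N A. \<Sum>y\<in>words_on N A.
        kraus (h i) s x * partial_trace N A (ecss_rho n f0 f1 e gQ gF1 GE \<rho>) x y * cnj (kraus (h i) s' y))
        = \<rho> s s'"
      by (simp only: kraus_recovers sum.reindex_bij_betw[OF h, where g = "\<lambda>t. \<Sum>x\<in>words_on N A. \<Sum>y\<in>words_on N A.
        kraus t s x * partial_trace N A (ecss_rho n f0 f1 e gQ gF1 GE \<rho>) x y * cnj (kraus t s' y)"])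
  qed
qed

end

section \<open>Obstructions to recovery\<close>

context ecss
begin

lemma ecss_authorized_reduced_state_determines:
  assumes "ecss_authorized n f0 f1 e gQ gF1 GE A"
    and "is_density (f0 - f1) \<rho>1" "is_density (f0 - f1) \<rho>2"
    and "\<And>x y. x \<in> words_on N A \<Longrightarrow> y \<in> words_on N A \<Longrightarrow>
           partial_trace N A (ecss_rho n f0 f1 e gQ gF1 GE \<rho>1) x y
           = partial_trace N A (ecss_rho n f0 f1 e gQ gF1 GE \<rho>2) x y"
    and "s \<in> S" "s' \<in> S"
  shows "\<rho>1 s s' = \<rho>2 s s'"
proof -
  from assms(1,5,6) obtain m and K :: "nat \<Rightarrow> (nat \<Rightarrow> 'a) \<Rightarrow> (nat \<Rightarrow> 'a) \<Rightarrow> complex" where K: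
    "\<And>\<rho>. is_density (f0 - f1) \<rho> \<Longrightarrow>
       (\<Sum>i<m. \<Sum>x\<in>words_on N A. \<Sum>y\<in>words_on N A.
          K i s x * partial_trace N A (ecss_rho n f0 f1 e gQ gF1 GE \<rho>) x y * cnj (K i s' y)) = \<rho> s s'"
    unfolding ecss_authorized_def by blast
  have "\<rho>1 s s' = (\<Sum>i<m. \<Sum>x\<in>words_on N A. \<Sum>y\<in>words_on N A.
          K i s x * partial_trace N A (ecss_rho n f0 f1 e gQ gF1 GE \<rho>1) x y * cnj (K i s' y))"
    using K[OF assms(2)] by simp
  also have "\<dots> = (\<Sum>i<m. \<Sum>x\<in>words_on N A. \<Sum>y\<in>words_on N A.
          K i s x * partial_trace N A (ecss_rho n f0 f1 e gQ gF1 GE \<rho>2) x y * cnj (K i s' y))"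
    using assms(4) by (intro sum.cong refl) simp
  also have "\<dots> = \<rho>2 s s'"
    using K[OF assms(3)] .
  finally show ?thesis .
qed

lemma ecss_rho_basis:
  assumes "a \<in> S"
  shows "ecss_rho n f0 f1 e gQ gF1 GE (\<lambda>s s'. if s = a \<and> s' = a then 1 else 0) w w'
     = (if w \<in> coset a then amp else 0) * (if w' \<in> coset a then amp else 0)"
proof -
  have "ecss_rho n f0 f1 e gQ gF1 GE (\<lambda>s s'. if s = a \<and> s' = a then 1 else 0) w w'
      = (\<Sum>s\<in>S. \<Sum>s'\<in>S. (if s = a then 1 else 0)
           * ((if w \<in> coset s then amp else 0) * (if w' \<in> coset s' then amp else 0)) * (if s' = a then 1 else 0))"
    unfolding ecss_rho_eq by (intro sum.cong) auto
  with assms show ?thesis by (simp add: sum_sum_delta)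
qed

text \<open>The encodings of \<open>|0\<rangle>\<close> and \<open>|s\<^sub>1\<rangle>\<close> have the same reduced state on \<open>A\<close>: translating the
  environment by \<open>w\<^sub>1\<close> carries \<open>coset 0\<close> onto \<open>coset s\<^sub>1\<close>.\<close>

theorem not_authorized_if_coset_word_vanishes:
  assumes "s1 \<in> S" "s1 \<noteq> 0" "w1 \<in> coset s1" "\<forall>i\<in>A. w1 i = 0"
  shows "\<not> ecss_authorized n f0 f1 e gQ gF1 GE A"
proof
  assume auth: "ecss_authorized n f0 f1 e gQ gF1 GE A"
  let ?\<rho> = "\<lambda>a s s'. if s = a \<and> s' = a then 1 else (0::complex)"
  have density: "is_density (f0 - f1) (?\<rho> a)" if "a \<in> S" for a
    using is_density_uniform_superposition[of "{a}" "f0 - f1"] that by (simp cong: if_cong)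
  have w1: "w1 \<in> env A"
    using assms(3,4) coset_subset_words by (auto simp: words_on_complement_iff)
  have translate: "bij_betw (\<lambda>z. z + w1) (env A) (env A)"
    by (rule bij_betw_byWitness[where f' = "\<lambda>z. z - w1"])
       (auto intro: words_on_add words_on_diff w1)
  have shift: "v + w1 \<in> coset s1 \<longleftrightarrow> v \<in> coset 0" for v
  proof
    assume "v + w1 \<in> coset s1"
    from coset_diff[OF this assms(3)] show "v \<in> coset 0" by simp
  next
    assume "v \<in> coset 0"
    from coset_add[OF this assms(3)] show "v + w1 \<in> coset s1" by simp
  qed
  have same_reduced_state: "partial_trace N A (ecss_rho n f0 f1 e gQ gF1 GE (?\<rho> s1)) x y
      = partial_trace N A (ecss_rho n f0 f1 e gQ gF1 GE (?\<rho> 0)) x y" for x y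
  proof -
    have "partial_trace N A (ecss_rho n f0 f1 e gQ gF1 GE (?\<rho> s1)) x y
        = (\<Sum>z\<in>env A. (if x + z \<in> coset s1 then amp else 0) * (if y + z \<in> coset s1 then amp else 0))"
      using assms(1) by (simp add: partial_trace_eq ecss_rho_basis)
    also have "\<dots> = (\<Sum>z\<in>env A. (if x + (z + w1) \<in> coset s1 then amp else 0)
                                * (if y + (z + w1) \<in> coset s1 then amp else 0))"
      by (rule sum.reindex_bij_betw[OF translate, symmetric])
    also have "\<dots> = partial_trace N A (ecss_rho n f0 f1 e gQ gF1 GE (?\<rho> 0)) x y"
      by (simp add: partial_trace_eq ecss_rho_basis add.assoc[symmetric] shift)
    finally show ?thesis .
  qed
  have "?\<rho> s1 s1 s1 = ?\<rho> 0 s1 s1"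
    by (rule ecss_authorized_reduced_state_determines[OF auth density[OF assms(1)]
          density[OF zero_in_words(1)] same_reduced_state assms(1) assms(1)])
  with assms(2) show False by simp
qed

text \<open>The uniform superposition and the uniform mixture of \<open>|0\<rangle>\<close> and \<open>|\<delta>\<rangle>\<close> have the same reduced
  state on \<open>A\<close>: the functional is constant on the words \<open>z + words_on N A\<close>, so the environment \<open>z\<close>
  already tells \<open>coset 0\<close> and \<open>coset \<delta>\<close> apart, which kills the coherences.\<close>

theorem not_authorized_if_separating_functional:
  assumes "\<delta> \<in> S"
    and vanish_local: "\<forall>w\<in>words_on N A. dot N Y w = 0"
    and vanish_coset0: "\<forall>w\<in>coset 0. dot N Y w = 0"
    and nonzero_coset: "\<forall>w\<in>coset \<delta>. dot N Y w \<noteq> 0"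
  shows "\<not> ecss_authorized n f0 f1 e gQ gF1 GE A"
proof
  assume auth: "ecss_authorized n f0 f1 e gQ gF1 GE A"
  have "basis_word \<delta> 0 0 \<in> coset \<delta>"
    unfolding coset_def by force
  with vanish_coset0 nonzero_coset have "\<delta> \<noteq> 0" by auto
  let ?P = "{0, \<delta>}"
  let ?sup = "\<lambda>s s'. if s \<in> ?P \<and> s' \<in> ?P then 1 / of_nat (card ?P) else (0::complex)"
  let ?mix = "\<lambda>s s'. if s = s' \<and> s \<in> ?P then 1 / of_nat (card ?P) else (0::complex)"
  have P: "?P \<subseteq> S" "?P \<noteq> {}" using assms(1) by auto
  have no_coherence: "\<not> (x + z \<in> coset s \<and> y + z \<in> coset s')"
    if "x \<in> words_on N A" "y \<in> words_on N A" "s \<in> ?P" "s' \<in> ?P" "s \<noteq> s'" for x y z s s'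
  proof
    assume "x + z \<in> coset s \<and> y + z \<in> coset s'"
    moreover have "dot N Y (x + z) = dot N Y (y + z)"
      using vanish_local that(1,2) by (simp add: dot_add_right)
    ultimately show False
      using that(3-5) vanish_coset0 nonzero_coset by auto
  qed
  have same_reduced_state: "partial_trace N A (ecss_rho n f0 f1 e gQ gF1 GE ?sup) x y
      = partial_trace N A (ecss_rho n f0 f1 e gQ gF1 GE ?mix) x y"
    if "x \<in> words_on N A" "y \<in> words_on N A" for x y
    unfolding partial_trace_ecss_rho
    by (intro sum.cong refl) (use no_coherence[OF that] in auto)
  have "?sup 0 \<delta> = ?mix 0 \<delta>"
    by (rule ecss_authorized_reduced_state_determines[OF auth is_density_uniform_superposition[OF P]
          is_density_uniform_mixture[OF P] same_reduced_state zero_in_words(1) assms(1)])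
  with \<open>\<delta> \<noteq> 0\<close> show False by simp
qed

end

section \<open>Authorized sets \<open>J \<union> {n..<n + u}\<close>\<close>

locale ecss_split = ecss n f0 f1 e gQ gF1 GE
  for n f0 f1 e :: nat and gQ gF1 GE :: "nat \<Rightarrow> nat \<Rightarrow> 'a::{finite,field}" +
  fixes u :: nat
  assumes u_le_e: "u \<le> e"
begin

abbreviation "U \<equiv> span_rows GE u"
abbreviation "V \<equiv> span_rows (\<lambda>k. GE (u + k)) (e - u)"

text \<open>The two sets whose minimum weights define \<open>\<tau>\<^sub>u\<close>.\<close>

abbreviation "primal_gap \<equiv> set_plus_vec F0 V - set_plus_vec F1 V"
abbreviation "dual_gap \<equiv> dual n (set_plus_vec F1 U) - dual n (set_plus_vec F0 U)"

lemma V_iff: "v \<in> V \<longleftrightarrow> (\<exists>d\<in>words e. (\<forall>k<u. d k = 0) \<and> v = lincomb GE e d)"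
  by (rule span_rows_suffix_iff[OF u_le_e])

lemma V_subset_E: "V \<subseteq> span_rows GE e"
  by (auto simp: V_iff)

lemma U_subset_E: "U \<subseteq> span_rows GE e"
proof
  fix v assume "v \<in> U"
  then obtain c where c: "c \<in> words u" "v = lincomb GE u c" by (auto simp: span_rows_iff_words)
  with lincomb_prefix[OF c(1) u_le_e] have "v = lincomb GE e c" by simp
  then show "v \<in> span_rows GE e" by simp
qed

lemma Q_in_F0_plus_U: "Q s \<in> set_plus_vec F0 U"
  unfolding F0_eq by (intro set_plus_vec_zero_right lincomb_in_span_rows zero_in_span_rows)

lemma basis_word_vanishes_iff:
  assumes "J \<subseteq> {..<n}"
  shows "(\<forall>i\<in>J \<union> {n..<n + u}. basis_word s r1 r2 i = 0)
    \<longleftrightarrow> (\<forall>i\<in>J. (Q s + lincomb gF1 f1 r1 + lincomb GE e r2) i = 0) \<and> (\<forall>k<u. r2 k = 0)"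
proof -
  have "(\<forall>i\<in>{n..<n + u}. basis_word s r1 r2 i = 0) \<longleftrightarrow> (\<forall>k<u. r2 k = 0)"
  proof
    assume vanish: "\<forall>i\<in>{n..<n + u}. basis_word s r1 r2 i = 0"
    show "\<forall>k<u. r2 k = 0"
    proof (intro allI impI)
      fix k assume "k < u"
      with vanish have "basis_word s r1 r2 (n + k) = 0" by simp
      then show "r2 k = 0" by (simp add: basis_word_above)
    qed
  next
    assume "\<forall>k<u. r2 k = 0"
    then have zero_above: "basis_word s r1 r2 (n + k) = 0" if "k < u" for k
      using that by (simp add: basis_word_above)
    show "\<forall>i\<in>{n..<n + u}. basis_word s r1 r2 i = 0"
    proof
      fix i assume i: "i \<in> {n..<n + u}"
      then have "basis_word s r1 r2 (n + (i - n)) = 0" by (intro zero_above) auto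
      with i show "basis_word s r1 r2 i = 0" by simp
    qed
  qed
  moreover have "basis_word s r1 r2 i = (Q s + lincomb gF1 f1 r1 + lincomb GE e r2) i" if "i \<in> J" for i
    using that assms by (intro basis_word_below) auto
  ultimately show ?thesis by (simp add: ball_Un)
qed

lemma F0_plus_V_intro:
  assumes "r2 \<in> words e" "\<forall>k<u. r2 k = 0"
  shows "Q s + lincomb gF1 f1 r1 + lincomb GE e r2 \<in> set_plus_vec F0 V"
proof -
  have "Q s + lincomb gF1 f1 r1 \<in> F0"
    unfolding F0_eq set_plus_vec_iff using lincomb_in_span_rows by blast
  moreover have "lincomb GE e r2 \<in> V"
    using assms by (auto simp: V_iff)
  ultimately show ?thesis
    unfolding set_plus_vec_iff by blast
qed

lemma F0_plus_V_elim:
  assumes "x \<in> set_plus_vec F0 V"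
  obtains s r1 r2 where "s \<in> S" "r1 \<in> words f1" "r2 \<in> words e" "\<forall>k<u. r2 k = 0"
    and "x = Q s + lincomb gF1 f1 r1 + lincomb GE e r2"
proof -
  obtain a v where "a \<in> F0" "v \<in> V" "x = a + v"
    using assms by (auto simp: set_plus_vec_iff)
  moreover from \<open>a \<in> F0\<close> obtain s r1 where "s \<in> S" "r1 \<in> words f1" "a = Q s + lincomb gF1 f1 r1"
    by (auto simp: F0_eq set_plus_vec_iff span_rows_iff_words)
  moreover from \<open>v \<in> V\<close> obtain r2 where "r2 \<in> words e" "\<forall>k<u. r2 k = 0" "v = lincomb GE e r2"
    by (auto simp: V_iff)
  ultimately show ?thesis using that by simp
qed

lemma in_primal_gap_iff:
  assumes "s \<in> S" "r1 \<in> words f1" "r2 \<in> words e" "\<forall>k<u. r2 k = 0"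
  shows "Q s + lincomb gF1 f1 r1 + lincomb GE e r2 \<in> primal_gap \<longleftrightarrow> s \<noteq> 0"
proof -
  let ?x = "Q s + lincomb gF1 f1 r1 + lincomb GE e r2"
  have "lincomb GE e r2 \<in> V" using assms(3,4) by (auto simp: V_iff)
  have "?x \<in> set_plus_vec F0 V"
    using assms(3,4) by (rule F0_plus_V_intro)
  moreover have "?x \<in> set_plus_vec F1 V \<longleftrightarrow> s = 0"
  proof
    assume "?x \<in> set_plus_vec F1 V"
    then obtain a v where "a \<in> F1" "v \<in> V" "?x = a + v" by (auto simp: set_plus_vec_iff)
    have "Q s = ?x - lincomb GE e r2 - lincomb gF1 f1 r1"
      by (simp only: add_diff_cancel_right')
    also have "\<dots> = (a - lincomb gF1 f1 r1) + (v - lincomb GE e r2)"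
      unfolding \<open>?x = a + v\<close> by (simp add: algebra_simps)
    finally have "Q s = (a - lincomb gF1 f1 r1) + (v - lincomb GE e r2)" .
    moreover have "a - lincomb gF1 f1 r1 \<in> F1"
      using \<open>a \<in> F1\<close> by (intro span_rows_diff lincomb_in_span_rows)
    moreover have "v - lincomb GE e r2 \<in> span_rows GE e"
      using \<open>v \<in> V\<close> \<open>lincomb GE e r2 \<in> V\<close> by (intro span_rows_diff subsetD[OF V_subset_E])
    ultimately have "Q s \<in> set_plus_vec F1 (span_rows GE e)"
      unfolding set_plus_vec_iff by blast
    with assms(1) show "s = 0" by (rule Q_in_F1_plus_E)
  next
    assume "s = 0"
    then have "?x = lincomb gF1 f1 r1 + lincomb GE e r2" by (simp add: lincomb_eq_0)
    with \<open>lincomb GE e r2 \<in> V\<close> show "?x \<in> set_plus_vec F1 V"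
      unfolding set_plus_vec_iff using lincomb_in_span_rows by blast
  qed
  ultimately show ?thesis by blast
qed

theorem exists_vanishing_coset_word_iff:
  assumes "J \<subseteq> {..<n}"
  shows "(\<exists>s\<in>S. s \<noteq> 0 \<and> (\<exists>w\<in>coset s. \<forall>i\<in>J \<union> {n..<n + u}. w i = 0))
     \<longleftrightarrow> (\<exists>x\<in>primal_gap. \<forall>i\<in>J. x i = 0)"
proof
  assume "\<exists>s\<in>S. s \<noteq> 0 \<and> (\<exists>w\<in>coset s. \<forall>i\<in>J \<union> {n..<n + u}. w i = 0)"
  then obtain s r1 r2 where sr: "s \<in> S" "r1 \<in> words f1" "r2 \<in> words e" and "s \<noteq> 0"
    and "\<forall>i\<in>J \<union> {n..<n + u}. basis_word s r1 r2 i = 0"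
    by (auto simp: coset_def)
  then have x: "\<forall>i\<in>J. (Q s + lincomb gF1 f1 r1 + lincomb GE e r2) i = 0" and "\<forall>k<u. r2 k = 0"
    using basis_word_vanishes_iff[OF assms] by simp_all
  with sr \<open>s \<noteq> 0\<close> have "Q s + lincomb gF1 f1 r1 + lincomb GE e r2 \<in> primal_gap"
    using in_primal_gap_iff by simp
  with x show "\<exists>x\<in>primal_gap. \<forall>i\<in>J. x i = 0" by blast
next
  assume "\<exists>x\<in>primal_gap. \<forall>i\<in>J. x i = 0"
  then obtain x where x: "x \<in> primal_gap" "\<forall>i\<in>J. x i = 0" by blast
  from x(1) have "x \<in> set_plus_vec F0 V" by simp
  then obtain s r1 r2 where sr: "s \<in> S" "r1 \<in> words f1" "r2 \<in> words e" "\<forall>k<u. r2 k = 0"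
    and x_eq: "x = Q s + lincomb gF1 f1 r1 + lincomb GE e r2"
    by (rule F0_plus_V_elim)
  have "s \<noteq> 0" using x(1) in_primal_gap_iff[OF sr] x_eq by simp
  moreover have "basis_word s r1 r2 \<in> coset s" using sr by (auto simp: coset_def)
  moreover have "\<forall>i\<in>J \<union> {n..<n + u}. basis_word s r1 r2 i = 0"
    using basis_word_vanishes_iff[OF assms] sr(4) x(2) x_eq by simp
  ultimately show "\<exists>s\<in>S. s \<noteq> 0 \<and> (\<exists>w\<in>coset s. \<forall>i\<in>J \<union> {n..<n + u}. w i = 0)"
    using sr(1) by blast
qed

lemma Q_decompose_if_no_dual_gap_word:
  assumes J: "J \<subseteq> {..<n}" and no_dual: "\<forall>y\<in>dual_gap. \<exists>i\<in>J. y i \<noteq> 0"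
  obtains r1 r2 d where "r1 \<in> words f1" "r2 \<in> words u"
    and "Q s = lincomb gF1 f1 r1 + lincomb GE u r2 + lincomb (unit_rows J) n d"
proof -
  let ?g = "stack (stack gF1 f1 GE) (f1 + u) (unit_rows J)"
  have rows: "\<forall>k<f1 + u + n. ?g k \<in> words n"
    using gF1_words GE_words u_le_e unit_rows_in_words[OF J] by (auto simp: stack_def)
  have "Q s \<in> span_rows ?g (f1 + u + n)"
  proof (rule ccontr)
    assume "Q s \<notin> span_rows ?g (f1 + u + n)"
    then obtain y where y: "y \<in> dual n (span_rows ?g (f1 + u + n))" "dot n y (Q s) \<noteq> 0"
      using notin_span_rows_dual[OF rows lincomb_in_words[OF gQ_words]] by blast
    have "0 \<in> set_plus_vec F1 U"
      by (intro set_plus_vec_zero_right zero_in_span_rows)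
    with y(1) J have "y \<in> dual n (set_plus_vec F1 U)" "\<forall>j\<in>J. y j = 0"
      by (simp_all add: span_rows_stack dual_set_plus_vec dual_span_unit_rows_iff)
    with no_dual have "y \<in> dual n (set_plus_vec F0 U)" by blast
    with Q_in_F0_plus_U y(2) show False by (simp add: dual_iff_dot)
  qed
  then show ?thesis
    using that by (auto simp: span_rows_stack set_plus_vec_iff span_rows_iff_words)
qed

text \<open>The randomness \<open>r\<^sub>1, r\<^sub>2\<close> cancels the \<open>F\<^sub>1 + U\<close> part of \<open>Q s\<close>, leaving a word supported on \<open>J\<close>.\<close>

theorem exists_supported_coset_word:
  assumes J: "J \<subseteq> {..<n}" and "s \<in> S"
    and no_dual: "\<forall>y\<in>dual_gap. \<exists>i\<in>J. y i \<noteq> 0"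
  shows "\<exists>w\<in>coset s. w \<in> words_on N (J \<union> {n..<n + u})"
proof -
  obtain r1 r2 d where r: "r1 \<in> words f1" "r2 \<in> words u"
    and Q_eq: "Q s = lincomb gF1 f1 r1 + lincomb GE u r2 + lincomb (unit_rows J) n d"
    using Q_decompose_if_no_dual_gap_word[OF J no_dual] .
  define w where "w = basis_word s (- r1) (- r2)"
  have "- r1 \<in> words f1" "- r2 \<in> words e"
    using r words_mono[OF u_le_e] by (auto simp: words_def)
  then have "w \<in> coset s" "w \<in> words N"
    by (auto simp: w_def coset_def basis_word_in_words)
  moreover have "w i = 0" if "i \<notin> J \<union> {n..<n + u}" for i
  proof (cases "i < n")
    case True
    have "lincomb GE e (- r2) = - lincomb GE u r2"
      using lincomb_prefix[OF r(2) u_le_e] by (simp add: fun_Compl_def lincomb_uminus)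
    with True Q_eq have "w i = lincomb (unit_rows J) n d i"
      by (simp add: w_def basis_word_below lincomb_uminus fun_Compl_def)
    with that show ?thesis by (simp add: lincomb_unit_rows_outside)
  next
    case False
    with that have "u \<le> i - n" by auto
    with r(2) have "w (n + (i - n)) = 0" by (simp add: w_def basis_word_above words_def)
    with False show ?thesis by simp
  qed
  ultimately show ?thesis by (auto simp: words_on_iff)
qed

lemma dual_gap_detects_secret:
  assumes "y \<in> dual_gap"
  obtains \<delta> where "\<delta> \<in> S" "dot n y (Q \<delta>) \<noteq> 0"
proof -
  obtain c where "c \<in> set_plus_vec F0 U" "dot n y c \<noteq> 0"
    using assms by (auto simp: dual_iff_dot)
  then obtain \<delta> r d where "\<delta> \<in> S" and c: "c = Q \<delta> + lincomb gF1 f1 r + lincomb GE u d"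
    by (auto simp: set_plus_vec_iff F0_eq span_rows_iff_words)
  have "dot n y (lincomb gF1 f1 r) = 0" "dot n y (lincomb GE u d) = 0"
    using assms by (simp_all add: dual_iff_dot set_plus_vec_zero_left set_plus_vec_zero_right)
  with \<open>dot n y c \<noteq> 0\<close> have "dot n y (Q \<delta>) \<noteq> 0"
    by (simp add: c dot_add_right)
  with \<open>\<delta> \<in> S\<close> show ?thesis by (rule that)
qed

lemma dot_dual_extension_supported:
  assumes J: "J \<subseteq> {..<n}" and y: "y \<in> dual n U" "\<forall>i\<in>J. y i = 0"
    and w: "w \<in> words_on N (J \<union> {n..<n + u})"
  shows "dot N (dual_extension y) w = 0"
proof -
  have "dot n y w = 0"
    unfolding dot_def using w y(2) by (intro sum.neutral) (auto simp: words_on_iff)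
  moreover have "dot n y (GE k) * w (n + k) = 0" for k
  proof (cases "k < u")
    case True
    with y(1) show ?thesis by (simp add: dual_span_rows_iff)
  next
    case False
    with J have "n + k \<notin> J \<union> {n..<n + u}" by auto
    with w show ?thesis by (simp add: words_on_iff)
  qed
  then have "(\<Sum>k<e. dot n y (GE k) * w (n + k)) = 0"
    by (intro sum.neutral) blast
  ultimately show ?thesis by (simp add: dot_dual_extension)
qed

theorem not_authorized_if_dual_gap_word:
  assumes J: "J \<subseteq> {..<n}" and "y \<in> dual_gap" "\<forall>i\<in>J. y i = 0"
  shows "\<not> ecss_authorized n f0 f1 e gQ gF1 GE (J \<union> {n..<n + u})"
proof -
  obtain \<delta> where "\<delta> \<in> S" "dot n y (Q \<delta>) \<noteq> 0"
    using assms(2) by (rule dual_gap_detects_secret)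
  moreover have "y \<in> dual n F1" "y \<in> dual n U"
    using assms(2) by (simp_all add: dual_set_plus_vec)
  moreover have "dot n y (Q 0) = 0"
    by (simp add: lincomb_eq_0 dot_def)
  ultimately show ?thesis
    using dot_dual_extension_supported[OF J _ assms(3)] dot_dual_extension_basis_word
    by (intro not_authorized_if_separating_functional[of \<delta> _ "dual_extension y"]) (auto simp: coset_def)
qed

theorem ecss_authorized_iff:
  assumes J: "J \<subseteq> {..<n}"
  shows "ecss_authorized n f0 f1 e gQ gF1 GE (J \<union> {n..<n + u}) \<longleftrightarrow>
    (\<forall>x\<in>primal_gap. \<exists>i\<in>J. x i \<noteq> 0) \<and> (\<forall>y\<in>dual_gap. \<exists>i\<in>J. y i \<noteq> 0)"
    (is "?auth \<longleftrightarrow> ?no_x \<and> ?no_y")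
proof
  assume auth: ?auth
  have ?no_x
  proof (rule ccontr)
    assume "\<not> ?no_x"
    then obtain s w where "s \<in> S" "s \<noteq> 0" "w \<in> coset s" "\<forall>i\<in>J \<union> {n..<n + u}. w i = 0"
      using exists_vanishing_coset_word_iff[OF J] by blast
    with auth show False using not_authorized_if_coset_word_vanishes by blast
  qed
  moreover have ?no_y
    using auth not_authorized_if_dual_gap_word[OF J] by blast
  ultimately show "?no_x \<and> ?no_y" ..
next
  assume no: "?no_x \<and> ?no_y"
  show ?auth
  proof (rule ecss_authorized_if_recoverable)
    fix s w assume "s \<in> S" "w \<in> coset s" "\<forall>i\<in>J \<union> {n..<n + u}. w i = 0"
    with no show "s = 0" using exists_vanishing_coset_word_iff[OF J] by blast
  next
    fix s assume "s \<in> S"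
    with no show "\<exists>w\<in>coset s. w \<in> words_on N (J \<union> {n..<n + u})"
      using exists_supported_coset_word[OF J] by blast
  qed
qed

lemma Q_unit_notin_F1_plus_E:
  assumes "k < f0 - f1"
  shows "Q (\<lambda>j. if j = k then 1 else 0) \<notin> set_plus_vec F1 (span_rows GE e)"
proof
  assume "Q (\<lambda>j. if j = k then 1 else 0) \<in> set_plus_vec F1 (span_rows GE e)"
  moreover have "(\<lambda>j. if j = k then 1 else 0) \<in> S" using assms by (simp add: words_def)
  ultimately have "(\<lambda>j. if j = k then 1 else (0::'a)) = 0" by (rule Q_in_F1_plus_E[rotated])
  from fun_cong[OF this, of k] show False by simp
qed

lemma primal_gap_nonempty: "primal_gap \<noteq> {}"
proof -
  let ?q = "Q (\<lambda>j. if j = 0 then 1 else 0)"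
  have "?q \<in> set_plus_vec F0 V"
    unfolding F0_eq by (intro set_plus_vec_zero_right lincomb_in_span_rows zero_in_span_rows)
  moreover have "?q \<notin> set_plus_vec F1 V"
    using Q_unit_notin_F1_plus_E[of 0] set_plus_vec_mono[OF order_refl V_subset_E] f1_less_f0
    by (meson subsetD zero_less_diff)
  ultimately show ?thesis by blast
qed

lemma dual_gap_nonempty: "dual_gap \<noteq> {}"
proof -
  let ?q = "Q (\<lambda>j. if j = 0 then 1 else 0)"
  have F1U: "set_plus_vec F1 U = span_rows (stack gF1 f1 GE) (f1 + u)"
    by (simp add: span_rows_stack)
  have "?q \<notin> span_rows (stack gF1 f1 GE) (f1 + u)"
    using Q_unit_notin_F1_plus_E[of 0] set_plus_vec_mono[OF order_refl U_subset_E] f1_less_f0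
    unfolding F1U[symmetric] by (meson subsetD zero_less_diff)
  moreover have "\<forall>k<f1 + u. stack gF1 f1 GE k \<in> words n"
    using gF1_words GE_words u_le_e by (auto simp: stack_def)
  ultimately obtain y where "y \<in> dual n (set_plus_vec F1 U)" "dot n y ?q \<noteq> 0"
    using notin_span_rows_dual lincomb_in_words[OF gQ_words] unfolding F1U by blast
  moreover from this(2) have "y \<notin> dual n (set_plus_vec F0 U)"
    using Q_in_F0_plus_U by (auto simp: dual_iff_dot)
  ultimately show ?thesis by blast
qed

theorem all_subsets_authorized_iff:
  assumes "tau \<le> n"
  shows "(\<forall>J. J \<subseteq> {..<n} \<and> card J = tau \<longrightarrow> ecss_authorized n f0 f1 e gQ gF1 GE (J \<union> {n..<n + u}))
    \<longleftrightarrow> int tau \<ge> tau_u n F0 F1 GE e u"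
proof -
  have "(\<forall>J. J \<subseteq> {..<n} \<and> card J = tau \<longrightarrow> ecss_authorized n f0 f1 e gQ gF1 GE (J \<union> {n..<n + u}))
      \<longleftrightarrow> (\<forall>J. J \<subseteq> {..<n} \<and> card J = tau \<longrightarrow> (\<forall>x\<in>primal_gap. \<exists>i\<in>J. x i \<noteq> 0))
        \<and> (\<forall>J. J \<subseteq> {..<n} \<and> card J = tau \<longrightarrow> (\<forall>y\<in>dual_gap. \<exists>i\<in>J. y i \<noteq> 0))"
    by (simp add: ecss_authorized_iff imp_conjR all_conj_distrib)
  also have "\<dots> \<longleftrightarrow> n < tau + Min (wt n ` primal_gap) \<and> n < tau + Min (wt n ` dual_gap)"
    using all_subsets_meet_supports_iff[OF primal_gap_nonempty assms]
      all_subsets_meet_supports_iff[OF dual_gap_nonempty assms] by blast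
  also have "\<dots> \<longleftrightarrow> int tau \<ge> tau_u n F0 F1 GE e u"
    by (simp add: tau_u_def Let_def wt_diff_def min_def) arith
  finally show ?thesis .
qed

end

theorem theorem3:
  fixes gQ gF1 GE :: "nat \<Rightarrow> nat \<Rightarrow> 'a::{finite,field}"
    and F0 F1 :: "(nat \<Rightarrow> 'a) set"
    and n e u f0 f1 tau :: nat
  assumes "f1 < f0"
    and "\<forall>k<f0 - f1. gQ k \<in> words n"
    and "\<forall>k<f1. gF1 k \<in> words n"
    and "lin_indep_rows (stack gQ (f0 - f1) gF1) f0"
    and "F1 = span_rows gF1 f1"
    and "F0 = span_rows (stack gQ (f0 - f1) gF1) f0"
    and "\<forall>k<e. GE k \<in> words n"
    and "F0 \<inter> span_rows GE e = {(\<lambda>_. 0)}"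
    and "u \<le> e"
    and "tau \<le> n"
  shows "(\<forall>J. J \<subseteq> {..<n} \<and> card J = tau \<longrightarrow>
            ecss_authorized n f0 f1 e gQ gF1 GE (J \<union> {n..<n + u}))
         \<longleftrightarrow> int tau \<ge> tau_u n F0 F1 GE e u"
proof -
  interpret ecss_split n f0 f1 e gQ gF1 GE u
    using assms by unfold_locales simp_all
  show ?thesis
    using all_subsets_authorized_iff[OF assms(10)] assms(5,6) by simp
qed

end
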